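(* Let $K$ be a finite simplicial complex. If $\gamma\colon C_*(K)\to C_*(\mathbb{R}^d)$ is a homological almost-embedding, then there is a nontrivial equivariant chain map $\tilde{\gamma}\colon C_*(\widetilde{K})\to C_*(\mathbb{S}^{d-1})$.
   Context: Coefficients are $\mathbb{Z}_2$. $C_*(K)$ is the simplicial chain complex, $C_*(\mathbb{R}^d)$ and $C_*(\mathbb{S}^{d-1})$ are singular chain complexes. A chain map is nontrivial if each vertex (0-cell) is sent to a $0$-chain consisting of an odd number of points. A homological almost-embedding of $K$ in $\mathbb{R}^d$ is a nontrivial chain map $C_*(K)\to C_*(\mathbb{R}^d)$ sending disjoint simplices of $K$ to chains with disjoint supports (support = union of images of singular simplices with nonzero coefficient). The deleted product $\widetilde{K}$ is the polyhedral subcomplex of $K\times K$ consisting of cells $\sigma\times\tau$ with $\sigma\cap\tau=\emptyset$, with the free cellular $\mathbb{Z}_2$-action $(x,y)\mapsto(y,x)$; $C_*(\widetilde{K})$ denotes its cellular chain complex. $\mathbb{S}^{d-1}$ carries the antipodal action; equivariance means commuting with the induced actions on chains. *)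

theory Defs
  imports "HOL-Analysis.Analysis" "HOL-Homology.Homology"
begin

text \<open>All chains have coefficients in Z2 and are represented as finite sets of
 generators (cells / singular simplices); addition is symmetric difference.\<close>

definition symd :: "'a set \<Rightarrow> 'a set \<Rightarrow> 'a set" where
  "symd A B = (A - B) \<union> (B - A)"

definition finite_simplicial_complex :: "'v set set \<Rightarrow> bool" where
  "finite_simplicial_complex K \<longleftrightarrow> finite K \<and> (\<forall>\<sigma>\<in>K. finite \<sigma> \<and> \<sigma> \<noteq> {}) \<and>
     (\<forall>\<sigma>\<in>K. \<forall>\<tau>. \<tau> \<subseteq> \<sigma> \<and> \<tau> \<noteq> {} \<longrightarrow> \<tau> \<in> K)"

definition ksimp :: "'v set set \<Rightarrow> nat \<Rightarrow> 'v set set" where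
  "ksimp K p = {\<sigma>\<in>K. card \<sigma> = Suc p}"

definition kbd :: "'v set set \<Rightarrow> 'v set set \<Rightarrow> 'v set set" where
  "kbd K A = {\<tau>\<in>K. odd (card {\<sigma>\<in>A. \<tau> \<subseteq> \<sigma> \<and> card \<sigma> = Suc (card \<tau>)})}"

definition zchain :: "nat \<Rightarrow> 'a topology \<Rightarrow> ((nat \<Rightarrow> real) \<Rightarrow> 'a) set \<Rightarrow> bool" where
  "zchain p X c \<longleftrightarrow> finite c \<and> (\<forall>f\<in>c. singular_simplex p X f)"

definition sbd :: "nat \<Rightarrow> ((nat \<Rightarrow> real) \<Rightarrow> 'a) set \<Rightarrow> ((nat \<Rightarrow> real) \<Rightarrow> 'a) set" where
  "sbd p c = (if p = 0 then {} else
     {g. odd (card {(f, k). f \<in> c \<and> k \<le> p \<and> singular_face p k f = g})})"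

definition ssupp :: "nat \<Rightarrow> ((nat \<Rightarrow> real) \<Rightarrow> 'a) set \<Rightarrow> 'a set" where
  "ssupp p c = (\<Union>f\<in>c. f ` standard_simplex p)"

definition zchain_map :: "(nat \<Rightarrow> 'c set) \<Rightarrow> ('c set \<Rightarrow> 'c set) \<Rightarrow> 'a topology
     \<Rightarrow> (nat \<Rightarrow> 'c set \<Rightarrow> ((nat \<Rightarrow> real) \<Rightarrow> 'a) set) \<Rightarrow> bool" where
  "zchain_map cells bd X \<gamma> \<longleftrightarrow>
     (\<forall>p A B. A \<subseteq> cells p \<longrightarrow> B \<subseteq> cells p \<longrightarrow> \<gamma> p (symd A B) = symd (\<gamma> p A) (\<gamma> p B)) \<and>
     (\<forall>p A. A \<subseteq> cells p \<longrightarrow> zchain p X (\<gamma> p A)) \<and>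
     (\<forall>p A. A \<subseteq> cells (Suc p) \<longrightarrow> sbd (Suc p) (\<gamma> (Suc p) A) = \<gamma> p (bd A))"

definition hom_almost_embedding ::
  "'v set set \<Rightarrow> (nat \<Rightarrow> 'v set set \<Rightarrow> ((nat \<Rightarrow> real) \<Rightarrow> real^'n) set) \<Rightarrow> bool" where
  "hom_almost_embedding K \<gamma> \<longleftrightarrow>
     zchain_map (ksimp K) (kbd K) (euclidean :: (real^'n) topology) \<gamma> \<and>
     (\<forall>v. {v} \<in> K \<longrightarrow> odd (card (\<gamma> 0 {{v}}))) \<and>
     (\<forall>\<sigma>\<in>K. \<forall>\<tau>\<in>K. \<sigma> \<inter> \<tau> = {} \<longrightarrow>
        ssupp (card \<sigma> - 1) (\<gamma> (card \<sigma> - 1) {\<sigma>}) \<inter> ssupp (card \<tau> - 1) (\<gamma> (card \<tau> - 1) {\<tau>}) = {})"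

text \<open>Deleted product: cells \<sigma> \<times> \<tau> with \<sigma> \<inter> \<tau> = {}, of dimension dim \<sigma> + dim \<tau>.\<close>
definition dcells :: "'v set set \<Rightarrow> nat \<Rightarrow> ('v set \<times> 'v set) set" where
  "dcells K p = {(\<sigma>, \<tau>). \<sigma> \<in> K \<and> \<tau> \<in> K \<and> \<sigma> \<inter> \<tau> = {} \<and> card \<sigma> + card \<tau> = p + 2}"

definition dfacet :: "'v set set \<Rightarrow> 'v set \<times> 'v set \<Rightarrow> 'v set \<times> 'v set \<Rightarrow> bool" where
  "dfacet K c d \<longleftrightarrow>
     (fst c \<in> K \<and> fst c \<subseteq> fst d \<and> card (fst d) = Suc (card (fst c)) \<and> snd c = snd d) \<or>
     (snd c \<in> K \<and> snd c \<subseteq> snd d \<and> card (snd d) = Suc (card (snd c)) \<and> fst c = fst d)"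

definition dbd :: "'v set set \<Rightarrow> ('v set \<times> 'v set) set \<Rightarrow> ('v set \<times> 'v set) set" where
  "dbd K C = {c. odd (card {d\<in>C. dfacet K c d})}"

definition dswap :: "('v set \<times> 'v set) set \<Rightarrow> ('v set \<times> 'v set) set" where
  "dswap C = (\<lambda>(\<sigma>, \<tau>). (\<tau>, \<sigma>)) ` C"

definition santi :: "nat \<Rightarrow> ((nat \<Rightarrow> real) \<Rightarrow> 'a::real_vector) set \<Rightarrow> ((nat \<Rightarrow> real) \<Rightarrow> 'a) set" where
  "santi p c = simplex_map p uminus ` c"

definition nontrivial_equivariant_sphere_map ::
  "'v set set \<Rightarrow> (nat \<Rightarrow> ('v set \<times> 'v set) set \<Rightarrow> ((nat \<Rightarrow> real) \<Rightarrow> real^'n) set) \<Rightarrow> bool" where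
  "nontrivial_equivariant_sphere_map K g \<longleftrightarrow>
     zchain_map (dcells K) (dbd K) (top_of_set (sphere (0::real^'n) 1)) g \<and>
     (\<forall>p A. A \<subseteq> dcells K p \<longrightarrow> g p (dswap A) = santi p (g p A)) \<and>
     (\<forall>v w. ({v}, {w}) \<in> dcells K 0 \<longrightarrow> odd (card (g 0 {({v}, {w})})))"

end

theory Submission
  imports Defs
begin

(* The cell \<sigma> \<times> \<tau> of the deleted product is sent to the image of the cross product
  \<gamma>(\<sigma>) \<times> \<gamma>(\<tau>) under the Gauss map. For disjoint \<sigma>, \<tau> the chains \<gamma>(\<sigma>) and \<gamma>(\<tau>) have
  disjoint supports, so for singular simplices f of \<gamma>(\<sigma>) and h of \<gamma>(\<tau>) the map
  (x, y) \<mapsto> (f x - h y) / |f x - h y| sends \<Delta>p \<times> \<Delta>q to the sphere. Composing it with the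
  (p+q)-simplices of the shuffle triangulation of \<Delta>p \<times> \<Delta>q, indexed by monotone lattice paths,
  gives a singular chain on the sphere.

  Over Z2 the boundary of this cross product has no signs: the faces of a shuffle simplex at a
  vertex where its path turns cancel in pairs, and the remaining faces are the shuffle simplices
  of (face of f) \<times> h and of f \<times> (face of h), so the map commutes with the boundary. Exchanging
  \<sigma> and \<tau> transposes the paths and negates the Gauss map, which is equivariance, and {v} \<times> {w}
  goes to |\<gamma>(v)| \<cdot> |\<gamma>(w)| points, an odd number. *)

section \<open>Sums of Z2-chains\<close>

definition z2_sum :: "'i set \<Rightarrow> ('i \<Rightarrow> 'b) \<Rightarrow> 'b set" where
  "z2_sum I \<phi> = {z. odd (card {i\<in>I. \<phi> i = z})}"

lemma z2_sum_subset_image: "z2_sum I \<phi> \<subseteq> \<phi> ` I"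
proof
  fix z assume "z \<in> z2_sum I \<phi>"
  then have "{i\<in>I. \<phi> i = z} \<noteq> {}" unfolding z2_sum_def by (metis (no_types, lifting) card.empty even_zero mem_Collect_eq)
  then show "z \<in> \<phi> ` I" by blast
qed

lemma finite_z2_sum: "finite I \<Longrightarrow> finite (z2_sum I \<phi>)"
  by (meson finite_imageI finite_subset z2_sum_subset_image)

lemma odd_card_filter_odd_iff:
  assumes "finite A"
  shows "odd (card {a\<in>A. odd (n a)}) \<longleftrightarrow> odd (sum n A)"
  using assms
proof (induction A rule: finite_induct)
  case empty then show ?case by simp
next
  case (insert x F)
  show ?case
  proof (cases "odd (n x)")
    case True
    then have "{a\<in>insert x F. odd (n a)} = insert x {a\<in>F. odd (n a)}" by auto
    moreover have "x \<notin> {a\<in>F. odd (n a)}" using insert by auto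
    ultimately show ?thesis using insert True by simp
  next
    case False
    then have "{a\<in>insert x F. odd (n a)} = {a\<in>F. odd (n a)}" by auto
    then show ?thesis using insert False by simp
  qed
qed

lemma card_Sigma_filter:
  assumes "finite A" "\<And>a. a \<in> A \<Longrightarrow> finite (J a)"
  shows "card {x\<in>Sigma A J. P x} = (\<Sum>a\<in>A. card {j\<in>J a. P (a,j)})"
proof -
  have "{x\<in>Sigma A J. P x} = Sigma A (\<lambda>a. {j\<in>J a. P (a,j)})" by auto
  then show ?thesis using assms by (simp add: card_SigmaI)
qed

lemma bij_betw_map_snd:
  assumes "bij_betw D P J"
  shows "bij_betw (\<lambda>(g,x). (g, D x)) (G \<times> P) (G \<times> J)"
proof -
  have "inj_on (\<lambda>(g,x). (g, D x)) (G \<times> P)"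
    using assms unfolding bij_betw_def inj_on_def by auto
  moreover have "(\<lambda>(g,x). (g, D x)) ` (G \<times> P) = G \<times> J"
  proof (intro equalityI subsetI)
    fix y assume "y \<in> (\<lambda>(g,x). (g, D x)) ` (G \<times> P)"
    then show "y \<in> G \<times> J" using assms unfolding bij_betw_def by auto
  next
    fix y assume y: "y \<in> G \<times> J"
    then obtain g j where gj: "y = (g,j)" "g \<in> G" "j \<in> J" by auto
    then obtain x where "x \<in> P" "D x = j" using assms unfolding bij_betw_def by (metis imageE)
    then show "y \<in> (\<lambda>(g,x). (g, D x)) ` (G \<times> P)" using gj by force
  qed
  ultimately show ?thesis by (simp add: bij_betw_def)
qed

lemma z2_sum_Sigma_inner:
  assumes "finite A" "\<And>a. a \<in> A \<Longrightarrow> finite (J a)"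
  shows "z2_sum (Sigma A (\<lambda>a. z2_sum (J a) (\<psi> a))) snd = z2_sum (Sigma A J) (\<lambda>(a,j). \<psi> a j)"
proof -
  have fin: "\<And>a. a \<in> A \<Longrightarrow> finite (z2_sum (J a) (\<psi> a))" using assms finite_z2_sum by blast
  have key: "odd (card {x\<in>Sigma A (\<lambda>a. z2_sum (J a) (\<psi> a)). snd x = z}) \<longleftrightarrow> odd (card {x\<in>Sigma A J. (\<lambda>(a,j). \<psi> a j) x = z})" for z
  proof -
    have "card {x\<in>Sigma A (\<lambda>a. z2_sum (J a) (\<psi> a)). snd x = z} = (\<Sum>a\<in>A. card {j\<in>z2_sum (J a) (\<psi> a). j = z})"
      using card_Sigma_filter[OF assms(1) fin] by simp
    also have "\<dots> = card {a\<in>A. odd (card {j\<in>J a. \<psi> a j = z})}"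
    proof -
      have "(\<Sum>a\<in>A. card {j\<in>z2_sum (J a) (\<psi> a). j = z}) = (\<Sum>a\<in>A. if odd (card {j\<in>J a. \<psi> a j = z}) then 1 else 0)"
      proof (rule sum.cong)
        fix a assume "a \<in> A"
        show "card {j\<in>z2_sum (J a) (\<psi> a). j = z} = (if odd (card {j\<in>J a. \<psi> a j = z}) then 1 else 0)"
        proof (cases "odd (card {j\<in>J a. \<psi> a j = z})")
          case True
          then have "{j\<in>z2_sum (J a) (\<psi> a). j = z} = {z}" by (auto simp: z2_sum_def)
          then show ?thesis using True by simp
        next
          case False
          then have "{j\<in>z2_sum (J a) (\<psi> a). j = z} = {}" by (auto simp: z2_sum_def)
          then show ?thesis using False by simp
        qed
      qed simp
      also have "\<dots> = card {a\<in>A. odd (card {j\<in>J a. \<psi> a j = z})}"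
        using assms(1) by (simp add: sum.If_cases Int_def conj_commute)
      finally show ?thesis .
    qed
    finally have e1: "card {x\<in>Sigma A (\<lambda>a. z2_sum (J a) (\<psi> a)). snd x = z} = card {a\<in>A. odd (card {j\<in>J a. \<psi> a j = z})}" .
    have e2: "card {x\<in>Sigma A J. (\<lambda>(a,j). \<psi> a j) x = z} = (\<Sum>a\<in>A. card {j\<in>J a. \<psi> a j = z})"
      using card_Sigma_filter[OF assms] by simp
    show "odd (card {x\<in>Sigma A (\<lambda>a. z2_sum (J a) (\<psi> a)). snd x = z}) \<longleftrightarrow> odd (card {x\<in>Sigma A J. (\<lambda>(a,j). \<psi> a j) x = z})"
      unfolding e1 e2 by (rule odd_card_filter_odd_iff[OF assms(1)])
  qed
  show ?thesis using key by (simp only: z2_sum_def mem_Collect_eq set_eq_iff simp_thms)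
qed

lemma odd_sum_mult_iff:
  assumes "finite B"
  shows "odd (\<Sum>b\<in>B. c b * m b) \<longleftrightarrow> odd (\<Sum>b\<in>{b\<in>B. odd (c b)}. (m b::nat))"
  using assms
proof (induction B rule: finite_induct)
  case empty then show ?case by simp
next
  case (insert x F)
  show ?case
  proof (cases "odd (c x)")
    case True
    then have "{b\<in>insert x F. odd (c b)} = insert x {b\<in>F. odd (c b)}" by auto
    moreover have "x \<notin> {b\<in>F. odd (c b)}" using insert by auto
    ultimately show ?thesis using insert True by (simp add: odd_add even_mult_iff)
  next
    case False
    then have "{b\<in>insert x F. odd (c b)} = {b\<in>F. odd (c b)}" by auto
    then show ?thesis using insert False by (simp add: odd_add even_mult_iff)
  qed
qed

lemma z2_sum_Sigma_outer:
  assumes "finite I" "\<And>b. finite (T b)"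
  shows "z2_sum (Sigma (z2_sum I \<phi>) T) \<psi> = z2_sum (Sigma I (\<lambda>i. T (\<phi> i))) (\<lambda>(i,t). \<psi> (\<phi> i, t))"
proof -
  have key: "odd (card {x\<in>Sigma (z2_sum I \<phi>) T. \<psi> x = z}) \<longleftrightarrow> odd (card {x\<in>Sigma I (\<lambda>i. T (\<phi> i)). (\<lambda>(i,t). \<psi> (\<phi> i, t)) x = z})" for z
  proof -
    define m where "m b = card {t\<in>T b. \<psi> (b,t) = z}" for b
    have e1: "card {x\<in>Sigma (z2_sum I \<phi>) T. \<psi> x = z} = (\<Sum>b\<in>z2_sum I \<phi>. m b)"
      using card_Sigma_filter[OF finite_z2_sum[OF assms(1)] assms(2)] m_def by simp
    have e2: "card {x\<in>Sigma I (\<lambda>i. T (\<phi> i)). (\<lambda>(i,t). \<psi> (\<phi> i, t)) x = z} = (\<Sum>i\<in>I. m (\<phi> i))"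
      using card_Sigma_filter[OF assms(1) assms(2)] m_def by simp
    also have "\<dots> = (\<Sum>b\<in>\<phi> ` I. (\<Sum>i\<in>{i\<in>I. \<phi> i = b}. m (\<phi> i)))"
      using sum.image_gen[OF assms(1)] by blast
    also have "\<dots> = (\<Sum>b\<in>\<phi> ` I. card {i\<in>I. \<phi> i = b} * m b)"
      by (intro sum.cong refl) simp
    finally have e2': "card {x\<in>Sigma I (\<lambda>i. T (\<phi> i)). (\<lambda>(i,t). \<psi> (\<phi> i, t)) x = z} = (\<Sum>b\<in>\<phi> ` I. card {i\<in>I. \<phi> i = b} * m b)" .
    have "{b\<in>\<phi> ` I. odd (card {i\<in>I. \<phi> i = b})} = z2_sum I \<phi>"
      using z2_sum_subset_image[of I \<phi>] by (auto simp: z2_sum_def)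
    then show ?thesis unfolding e1 e2' using odd_sum_mult_iff[of "\<phi> ` I" "\<lambda>b. card {i\<in>I. \<phi> i = b}" m] assms(1) by simp
  qed
  show ?thesis using key by (simp only: z2_sum_def mem_Collect_eq set_eq_iff simp_thms)
qed

lemma z2_sum_Un_disjoint:
  assumes "finite I" "finite J" "I \<inter> J = {}"
  shows "z2_sum (I \<union> J) \<phi> = symd (z2_sum I \<phi>) (z2_sum J \<phi>)"
proof -
  have "card {i\<in>I \<union> J. \<phi> i = z} = card {i\<in>I. \<phi> i = z} + card {i\<in>J. \<phi> i = z}" for z
  proof -
    have "{i\<in>I \<union> J. \<phi> i = z} = {i\<in>I. \<phi> i = z} \<union> {i\<in>J. \<phi> i = z}" by auto
    then show ?thesis using assms by (simp add: card_Un_disjoint disjoint_iff)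
  qed
  then show ?thesis by (auto simp: z2_sum_def symd_def)
qed

lemma z2_sum_cong:
  assumes "I = J" "\<And>i. i \<in> J \<Longrightarrow> \<phi> i = \<psi> i"
  shows "z2_sum I \<phi> = z2_sum J \<psi>"
proof -
  have "{i\<in>I. \<phi> i = z} = {i\<in>J. \<psi> i = z}" for z using assms by auto
  then show ?thesis by (simp add: z2_sum_def)
qed

lemma z2_sum_reindex_bij_betw:
  assumes "bij_betw e I J"
  shows "z2_sum J \<phi> = z2_sum I (\<phi> \<circ> e)"
proof -
  have "card {j\<in>J. \<phi> j = z} = card {i\<in>I. \<phi> (e i) = z}" for z
  proof -
    have "bij_betw e {i\<in>I. \<phi> (e i) = z} {j\<in>J. \<phi> j = z}"
      using assms unfolding bij_betw_def inj_on_def by auto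
    then show ?thesis by (simp add: bij_betw_same_card)
  qed
  then show ?thesis by (simp add: z2_sum_def)
qed

lemma z2_sum_empty[simp]: "z2_sum {} \<phi> = {}"
  by (simp add: z2_sum_def)

lemma odd_card_z2_sum_iff:
  assumes "finite I"
  shows "odd (card (z2_sum I \<phi>)) \<longleftrightarrow> odd (card I)"
proof -
  have "sum (\<lambda>_. 1::nat) I = (\<Sum>b\<in>\<phi> ` I. sum (\<lambda>_. 1::nat) {i\<in>I. \<phi> i = b})"
    by (rule sum.image_gen[OF assms])
  then have c: "card I = (\<Sum>b\<in>\<phi> ` I. card {i\<in>I. \<phi> i = b})"
    by (metis (no_types, lifting) card_eq_sum sum.cong)
  have r: "z2_sum I \<phi> = {b\<in>\<phi> ` I. odd (card {i\<in>I. \<phi> i = b})}"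
    using z2_sum_subset_image[of I \<phi>] by (auto simp: z2_sum_def)
  show ?thesis unfolding r c by (rule odd_card_filter_odd_iff) (use assms in simp)
qed

lemma even_card_involution:
  assumes "finite S" "\<And>x. x \<in> S \<Longrightarrow> \<iota> x \<in> S" "\<And>x. x \<in> S \<Longrightarrow> \<iota> (\<iota> x) = x" "\<And>x. x \<in> S \<Longrightarrow> \<iota> x \<noteq> x"
  shows "even (card S)"
  using assms
proof (induction "card S" arbitrary: S rule: less_induct)
  case less
  show ?case
  proof (cases "S = {}")
    case True then show ?thesis by simp
  next
    case False
    then obtain x where x: "x \<in> S" by blast
    define S' where "S' = S - {x, \<iota> x}"
    have "\<iota> x \<in> S" "\<iota> x \<noteq> x" using less(3) less(5) x by auto
    moreover have "card {x, \<iota> x} \<le> card S" using less(2) x \<open>\<iota> x \<in> S\<close> by (intro card_mono) auto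
    ultimately have cS: "card S = card S' + 2" using less(2) x unfolding S'_def
      by (simp add: card_Diff_subset)
    have "even (card S')"
    proof (rule less(1))
      show "card S' < card S" using cS by simp
      show "finite S'" using less(2) S'_def by simp
      show "\<iota> y \<in> S'" if "y \<in> S'" for y
      proof -
        have y: "y \<in> S" "y \<noteq> x" "y \<noteq> \<iota> x" using that S'_def by auto
        have "\<iota> (\<iota> y) = y" "\<iota> (\<iota> x) = x" using less(4) y x by auto
        then have "\<iota> y \<noteq> x" "\<iota> y \<noteq> \<iota> x" using y by metis+
        then show ?thesis using less(3) y S'_def by auto
      qed
      show "\<iota> (\<iota> y) = y" if "y \<in> S'" for y using that less(4) S'_def by auto
      show "\<iota> y \<noteq> y" if "y \<in> S'" for y using that less(5) S'_def by auto
    qed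
    then show ?thesis using cS by simp
  qed
qed

lemma z2_sum_involution:
  assumes "finite I" "\<And>x. x \<in> I \<Longrightarrow> \<iota> x \<in> I" "\<And>x. x \<in> I \<Longrightarrow> \<iota> (\<iota> x) = x" "\<And>x. x \<in> I \<Longrightarrow> \<iota> x \<noteq> x"
    "\<And>x. x \<in> I \<Longrightarrow> \<phi> (\<iota> x) = \<phi> x"
  shows "z2_sum I \<phi> = {}"
proof -
  have "even (card {i\<in>I. \<phi> i = z})" for z
    by (rule even_card_involution[where \<iota>=\<iota>]) (use assms in auto)
  then show ?thesis by (auto simp: z2_sum_def)
qed

lemma z2_sum_inj:
  assumes "inj_on m X"
  shows "z2_sum X m = m ` X"
proof (rule equalityI[OF z2_sum_subset_image subsetI])
  fix z assume "z \<in> m ` X"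
  then obtain x where x: "x \<in> X" "z = m x" by blast
  then have "{i\<in>X. m i = z} = {x}" using assms by (auto dest: inj_onD)
  then show "z \<in> z2_sum X m" by (simp add: z2_sum_def)
qed

lemma z2_sum_Sigma_reindex:
  assumes "inj_on f A"
  shows "z2_sum (Sigma (f ` A) C) snd = z2_sum (Sigma A (\<lambda>a. C (f a))) snd"
proof -
  have "bij_betw (\<lambda>(a,z). (f a, z)) (Sigma A (\<lambda>a. C (f a))) (Sigma (f ` A) C)"
  proof (rule bij_betw_imageI)
    show "inj_on (\<lambda>(a,z). (f a, z)) (Sigma A (\<lambda>a. C (f a)))"
      by (rule inj_onI) (auto dest: inj_onD[OF assms])
  qed force
  then show ?thesis
    by (subst z2_sum_reindex_bij_betw) (auto intro!: z2_sum_cong)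
qed

lemma z2_sum_comp_inj:
  assumes "inj_on m (\<phi> ` I)"
  shows "z2_sum I (m \<circ> \<phi>) = m ` z2_sum I \<phi>"
proof -
  have key: "{j\<in>I. m (\<phi> j) = m (\<phi> i)} = {j\<in>I. \<phi> j = \<phi> i}" if i: "i \<in> I" for i
  proof -
    have "\<phi> j = \<phi> i" if "j \<in> I" "m (\<phi> j) = m (\<phi> i)" for j
      using inj_onD[OF assms that(2)] that(1) i by blast
    then show ?thesis by auto
  qed
  show ?thesis
  proof (intro equalityI subsetI)
      fix w
      assume w: "w \<in> z2_sum I (m \<circ> \<phi>)"
      have "w \<in> (m \<circ> \<phi>) ` I" using z2_sum_subset_image[of I "m \<circ> \<phi>"] w by (rule subsetD)
      then obtain i where i: "i \<in> I" "m (\<phi> i) = w" by (metis comp_apply imageE)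
      then have "odd (card {j\<in>I. \<phi> j = \<phi> i})" using key[OF i(1)] w by (simp add: z2_sum_def)
      then have "\<phi> i \<in> z2_sum I \<phi>" by (simp add: z2_sum_def)
      then show "w \<in> m ` z2_sum I \<phi>" using i by blast
    next
      fix w
      assume "w \<in> m ` z2_sum I \<phi>"
      then obtain z where z: "z \<in> z2_sum I \<phi>" "w = m z" by auto
      have "z \<in> \<phi> ` I" using z2_sum_subset_image[of I \<phi>] z(1) by (rule subsetD)
      then obtain i where i: "i \<in> I" "\<phi> i = z" by (metis imageE)
      have "odd (card {j\<in>I. \<phi> j = \<phi> i})" using z i by (simp add: z2_sum_def)
      then have "odd (card {j\<in>I. m (\<phi> j) = m (\<phi> i)})" using key[OF i(1)] by simp
      then show "w \<in> z2_sum I (m \<circ> \<phi>)" using z i by (simp add: z2_sum_def)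
  qed
qed



lemma symd_cancel: "symd (symd X Y) (symd Z Y) = symd X Z"
  by (auto simp: symd_def)

lemma z2_sum_Sigma_symd:
  assumes "finite A" "finite B" "\<And>a. finite (T a)"
  shows "z2_sum (Sigma (symd A B) T) \<psi> = symd (z2_sum (Sigma A T) \<psi>) (z2_sum (Sigma B T) \<psi>)"
proof -
  have fin: "\<And>X. finite X \<Longrightarrow> finite (Sigma X T)" using assms(3) by auto
  have e1: "Sigma (symd A B) T = Sigma (A - B) T \<union> Sigma (B - A) T" by (auto simp: symd_def)
  have e2: "Sigma A T = Sigma (A - B) T \<union> Sigma (A \<inter> B) T" by auto
  have e3: "Sigma B T = Sigma (B - A) T \<union> Sigma (A \<inter> B) T" by auto
  have r1: "z2_sum (Sigma (symd A B) T) \<psi> = symd (z2_sum (Sigma (A - B) T) \<psi>) (z2_sum (Sigma (B - A) T) \<psi>)"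
    unfolding e1 by (rule z2_sum_Un_disjoint) (use assms fin in auto)
  have r2: "z2_sum (Sigma A T) \<psi> = symd (z2_sum (Sigma (A - B) T) \<psi>) (z2_sum (Sigma (A \<inter> B) T) \<psi>)"
    unfolding e2 by (rule z2_sum_Un_disjoint) (use assms fin in auto)
  have r3: "z2_sum (Sigma B T) \<psi> = symd (z2_sum (Sigma (B - A) T) \<psi>) (z2_sum (Sigma (A \<inter> B) T) \<psi>)"
    unfolding e3 by (rule z2_sum_Un_disjoint) (use assms fin in auto)
  show ?thesis by (simp only: r1 r2 r3 symd_cancel)
qed

lemma z2_sum_Sigma_singleton:
  assumes "finite C"
  shows "z2_sum (Sigma {x} (\<lambda>_. C)) snd = C"
proof -
  have "{i\<in>Sigma {x} (\<lambda>_. C). snd i = z} = (if z \<in> C then {(x,z)} else {})" for z by auto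
  then show ?thesis by (auto simp: z2_sum_def)
qed

lemma zchain_map_empty:
  assumes "zchain_map cells bd X \<gamma>"
  shows "\<gamma> p {} = {}"
proof -
  have L: "\<forall>p A B. A \<subseteq> cells p \<longrightarrow> B \<subseteq> cells p \<longrightarrow> \<gamma> p (symd A B) = symd (\<gamma> p A) (\<gamma> p B)"
    using assms(1) unfolding zchain_map_def by (rule conjunct1)
  have "\<gamma> p (symd {} {}) = symd (\<gamma> p {}) (\<gamma> p {})" using L by simp
  then show ?thesis by (simp add: symd_def)
qed

lemma zchain_map_as_z2_sum:
  assumes "zchain_map cells bd X \<gamma>" "finite A" "A \<subseteq> cells p"
  shows "\<gamma> p A = z2_sum (Sigma A (\<lambda>\<sigma>. \<gamma> p {\<sigma>})) snd"
  using assms(2,3)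
proof (induction A rule: finite_induct)
  case empty then show ?case using zchain_map_empty[OF assms(1)] by simp
next
  case (insert x F)
  have L: "\<forall>p A B. A \<subseteq> cells p \<longrightarrow> B \<subseteq> cells p \<longrightarrow> \<gamma> p (symd A B) = symd (\<gamma> p A) (\<gamma> p B)"
    using assms(1) unfolding zchain_map_def by (rule conjunct1)
  have Z: "\<forall>p A. A \<subseteq> cells p \<longrightarrow> zchain p X (\<gamma> p A)"
    using assms(1) unfolding zchain_map_def by blast
  have lin: "\<gamma> p (symd {x} F) = symd (\<gamma> p {x}) (\<gamma> p F)"
    using L insert(4) by simp
  have "symd {x} F = insert x F" using insert(2) by (auto simp: symd_def)
  then have l2: "\<gamma> p (insert x F) = symd (\<gamma> p {x}) (\<gamma> p F)" using lin by simp
  have fin: "finite (\<gamma> p {\<sigma>})" if "\<sigma> \<in> insert x F" for \<sigma>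
    using Z insert(4) that unfolding zchain_def by blast
  have "Sigma (insert x F) (\<lambda>\<sigma>. \<gamma> p {\<sigma>}) = Sigma {x} (\<lambda>_. \<gamma> p {x}) \<union> Sigma F (\<lambda>\<sigma>. \<gamma> p {\<sigma>})" by auto
  then have "z2_sum (Sigma (insert x F) (\<lambda>\<sigma>. \<gamma> p {\<sigma>})) snd = symd (z2_sum (Sigma {x} (\<lambda>_. \<gamma> p {x})) snd) (z2_sum (Sigma F (\<lambda>\<sigma>. \<gamma> p {\<sigma>})) snd)"
    using z2_sum_Un_disjoint[of "Sigma {x} (\<lambda>_. \<gamma> p {x})" "Sigma F (\<lambda>\<sigma>. \<gamma> p {\<sigma>})" snd] insert fin by auto
  also have "\<dots> = symd (\<gamma> p {x}) (\<gamma> p F)"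
    using z2_sum_Sigma_singleton[of "\<gamma> p {x}" x] fin insert by auto
  finally show ?case using l2 by simp
qed

lemma sbd_as_z2_sum:
  assumes "finite c" "p > 0"
  shows "sbd p c = z2_sum (c \<times> {..p}) (\<lambda>(f,k). singular_face p k f)"
proof -
  have "{(f, k). f \<in> c \<and> k \<le> p \<and> singular_face p k f = g} = {x\<in>c \<times> {..p}. (\<lambda>(f,k). singular_face p k f) x = g}" for g
    by auto
  then show ?thesis using assms by (simp add: sbd_def z2_sum_def)
qed

lemma sbd_z2_sum_Sigma:
  assumes "finite A" "\<And>a. finite (C a)"
  shows "sbd (Suc m) (z2_sum (Sigma A C) snd) = z2_sum (Sigma A (\<lambda>a. sbd (Suc m) (C a))) snd"
proof -
  have fS: "finite (Sigma A C)" using assms by auto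
  have "sbd (Suc m) (z2_sum (Sigma A C) snd)
      = z2_sum (z2_sum (Sigma A C) snd \<times> {..Suc m}) (\<lambda>(f,k). singular_face (Suc m) k f)"
    by (rule sbd_as_z2_sum[OF finite_z2_sum[OF fS]]) simp
  also have "\<dots> = z2_sum (Sigma (Sigma A C) (\<lambda>_. {..Suc m})) (\<lambda>((a,z),k). singular_face (Suc m) k z)"
    by (subst z2_sum_Sigma_outer[OF fS]) (auto intro!: z2_sum_cong)
  also have "\<dots> = z2_sum (Sigma A (\<lambda>a. C a \<times> {..Suc m})) (\<lambda>(a,(z,k)). singular_face (Suc m) k z)"
  proof -
    have "bij_betw (\<lambda>(a,(z,k)). ((a,z),k)) (Sigma A (\<lambda>a. C a \<times> {..Suc m})) (Sigma (Sigma A C) (\<lambda>_. {..Suc m}))"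
      by (rule bij_betw_byWitness[where f'="\<lambda>((a,z),k). (a,(z,k))"]) auto
    then show ?thesis by (subst z2_sum_reindex_bij_betw) (auto intro!: z2_sum_cong)
  qed
  also have "\<dots> = z2_sum (Sigma A (\<lambda>a. z2_sum (C a \<times> {..Suc m}) (\<lambda>(z,k). singular_face (Suc m) k z))) snd"
    by (rule z2_sum_Sigma_inner[symmetric]) (use assms in auto)
  also have "\<dots> = z2_sum (Sigma A (\<lambda>a. sbd (Suc m) (C a))) snd"
    using sbd_as_z2_sum[OF assms(2), of "Suc m"] by simp
  finally show ?thesis .
qed

lemma z2_sum_Sigma_Sigma:
  assumes "finite A" "\<And>a. a \<in> A \<Longrightarrow> finite (F a)" "\<And>b. finite (C b)"
  shows "z2_sum (Sigma A (\<lambda>a. z2_sum (Sigma (F a) C) snd)) snd = z2_sum (Sigma (z2_sum (Sigma A F) snd) C) snd"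
proof -
  have "z2_sum (Sigma A (\<lambda>a. z2_sum (Sigma (F a) C) snd)) snd = z2_sum (Sigma A (\<lambda>a. Sigma (F a) C)) (\<lambda>(a,(b,z)). z)"
    by (subst z2_sum_Sigma_inner) (use assms in \<open>auto intro!: z2_sum_cong\<close>)
  also have "\<dots> = z2_sum (Sigma (Sigma A F) (\<lambda>i. C (snd i))) (\<lambda>(i,z). z)"
  proof -
    have "bij_betw (\<lambda>((a,b),z). (a,(b,z))) (Sigma (Sigma A F) (\<lambda>i. C (snd i))) (Sigma A (\<lambda>a. Sigma (F a) C))"
      by (rule bij_betw_byWitness[where f'="\<lambda>(a,(b,z)). ((a,b),z)"]) auto
    then show ?thesis by (subst z2_sum_reindex_bij_betw) (auto intro!: z2_sum_cong)
  qed
  also have "\<dots> = z2_sum (Sigma (z2_sum (Sigma A F) snd) C) snd"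
    by (subst z2_sum_Sigma_outer) (use assms in \<open>auto intro!: z2_sum_cong\<close>)
  finally show ?thesis .
qed



section \<open>Shuffle paths\<close>

(* a i is the first coordinate of vertex i of a monotone lattice path from (0,0) to (p,q); the
  second coordinate is i - a i. These paths index the (p+q)-simplices of the standard
  triangulation of \<Delta>p \<times> \<Delta>q. *)
definition shuffle_paths :: "nat \<Rightarrow> nat \<Rightarrow> (nat \<Rightarrow> nat) set" where
  "shuffle_paths p q = {a. a 0 = 0 \<and> a (p+q) = p \<and> (\<forall>i<p+q. a (Suc i) = a i \<or> a (Suc i) = Suc (a i)) \<and> (\<forall>i>p+q. a i = 0)}"

lemma shuffle_pathsD:
  assumes "a \<in> shuffle_paths p q"
  shows "a 0 = 0" "a (p+q) = p" "\<And>i. i < p+q \<Longrightarrow> a (Suc i) = a i \<or> a (Suc i) = Suc (a i)" "\<And>i. i > p+q \<Longrightarrow> a i = 0"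
  using assms by (auto simp: shuffle_paths_def)

lemma shuffle_path_step: "a \<in> shuffle_paths p q \<Longrightarrow> i < p+q \<Longrightarrow> a i \<le> a (Suc i) \<and> a (Suc i) \<le> Suc (a i)"
  using shuffle_pathsD(3) by fastforce

lemma shuffle_path_mono_lipschitz:
  assumes "a \<in> shuffle_paths p q" "j \<le> p+q"
  shows "i \<le> j \<Longrightarrow> a i \<le> a j \<and> a j \<le> a i + (j - i)"
  using assms(2)
proof (induction j)
  case 0 then show ?case by simp
next
  case (Suc j)
  show ?case
  proof (cases "i = Suc j")
    case True then show ?thesis by simp
  next
    case False
    then have "i \<le> j" using Suc by simp
    then have ih: "a i \<le> a j \<and> a j \<le> a i + (j - i)" using Suc by simp
    have "a (Suc j) = a j \<or> a (Suc j) = Suc (a j)" using shuffle_pathsD(3)[OF assms(1)] Suc by simp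
    then show ?thesis using ih \<open>i \<le> j\<close> by auto
  qed
qed

lemma shuffle_path_mono: "a \<in> shuffle_paths p q \<Longrightarrow> i \<le> j \<Longrightarrow> j \<le> p+q \<Longrightarrow> a i \<le> a j"
  using shuffle_path_mono_lipschitz by blast

lemma shuffle_path_lipschitz: "a \<in> shuffle_paths p q \<Longrightarrow> i \<le> j \<Longrightarrow> j \<le> p+q \<Longrightarrow> a j \<le> a i + (j - i)"
  using shuffle_path_mono_lipschitz by blast

lemma shuffle_path_le_index: "a \<in> shuffle_paths p q \<Longrightarrow> i \<le> p+q \<Longrightarrow> a i \<le> i"
  using shuffle_path_lipschitz[of a p q 0 i] shuffle_pathsD(1)[of a p q] by simp

lemma shuffle_path_le: "a \<in> shuffle_paths p q \<Longrightarrow> a i \<le> p"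
  by (metis le0 linorder_not_le order.refl shuffle_pathsD(2,4) shuffle_path_mono)

lemma shuffle_path_index_diff_le: "a \<in> shuffle_paths p q \<Longrightarrow> i \<le> p+q \<Longrightarrow> i - a i \<le> q"
  using shuffle_path_lipschitz[of a p q i "p+q"] shuffle_pathsD(2)[of a p q] by simp

lemma finite_shuffle_paths: "finite (shuffle_paths p q)"
proof -
  let ?n = "p+q"
  let ?m = "\<lambda>a. map a [0..<Suc ?n]"
  have "inj_on ?m (shuffle_paths p q)"
  proof (rule inj_onI)
    fix a b assume a: "a \<in> shuffle_paths p q" and b: "b \<in> shuffle_paths p q" and e: "?m a = ?m b"
    show "a = b"
    proof
      fix i show "a i = b i"
      proof (cases "i \<le> ?n")
        case True
        have "a i = ?m a ! i" "b i = ?m b ! i" using True by (simp_all only: nth_map_upt) auto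
        then show ?thesis by (simp only: e)
      next
        case False then show ?thesis using shuffle_pathsD(4)[OF a] shuffle_pathsD(4)[OF b] by simp
      qed
    qed
  qed
  moreover have "?m ` shuffle_paths p q \<subseteq> {xs. set xs \<subseteq> {..p} \<and> length xs = Suc ?n}"
    using shuffle_path_le by fastforce
  moreover have "finite {xs. set xs \<subseteq> {..p} \<and> length xs = Suc ?n}"
    by (rule finite_lists_length_eq) simp
  ultimately show ?thesis by (meson finite_imageD finite_subset)
qed

lemma finite_shuffle_path_pairs:
  fixes n :: nat
  shows "finite {(a,k). a \<in> shuffle_paths p q \<and> P a k \<and> k \<le> n}"
proof -
  have "{(a,k). a \<in> shuffle_paths p q \<and> P a k \<and> k \<le> n} \<subseteq> shuffle_paths p q \<times> {..n}" by auto
  then show ?thesis using finite_shuffle_paths by (meson finite_SigmaI finite_atMost finite_subset)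
qed

lemma shuffle_paths_0_0: "shuffle_paths 0 0 = {\<lambda>_. 0}"
  by (auto simp: shuffle_paths_def fun_eq_iff) (metis not_gr0)

definition transpose_path :: "nat \<Rightarrow> (nat \<Rightarrow> nat) \<Rightarrow> nat \<Rightarrow> nat" where
  "transpose_path n a = (\<lambda>i. if i \<le> n then i - a i else 0)"

lemma transpose_path_in_shuffle_paths:
  assumes "a \<in> shuffle_paths p q"
  shows "transpose_path (p+q) a \<in> shuffle_paths q p"
proof -
  have "transpose_path (p+q) a 0 = 0" by (simp add: transpose_path_def)
  moreover have "transpose_path (p+q) a (q+p) = q" using shuffle_pathsD(2)[OF assms] by (simp add: transpose_path_def add.commute)
  moreover have "transpose_path (p+q) a (Suc i) = transpose_path (p+q) a i \<or> transpose_path (p+q) a (Suc i) = Suc (transpose_path (p+q) a i)" if "i < q+p" for i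
  proof -
    have "a i \<le> i" "a (Suc i) \<le> Suc i" using shuffle_path_le_index[OF assms] that by auto
    moreover have "a (Suc i) = a i \<or> a (Suc i) = Suc (a i)" using shuffle_pathsD(3)[OF assms] that by simp
    ultimately show ?thesis using that by (auto simp: transpose_path_def)
  qed
  moreover have "\<forall>i>q+p. transpose_path (p+q) a i = 0" by (simp add: transpose_path_def)
  ultimately show ?thesis by (simp add: shuffle_paths_def add.commute)
qed

lemma transpose_path_transpose_path:
  assumes "a \<in> shuffle_paths p q"
  shows "transpose_path (p+q) (transpose_path (p+q) a) = a"
proof
  fix i show "transpose_path (p+q) (transpose_path (p+q) a) i = a i"
    using shuffle_path_le_index[OF assms, of i] shuffle_pathsD(4)[OF assms, of i] by (auto simp: transpose_path_def)
qed

lemma bij_betw_transpose_path: "bij_betw (transpose_path (p+q)) (shuffle_paths p q) (shuffle_paths q p)"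
proof (rule bij_betw_byWitness[where f'="transpose_path (p+q)"])
  show "\<forall>a\<in>shuffle_paths p q. transpose_path (p+q) (transpose_path (p+q) a) = a" using transpose_path_transpose_path by blast
  show "\<forall>a\<in>shuffle_paths q p. transpose_path (p+q) (transpose_path (p+q) a) = a" using transpose_path_transpose_path[of _ q p] by (simp add: add.commute)
  show "transpose_path (p+q) ` shuffle_paths p q \<subseteq> shuffle_paths q p" using transpose_path_in_shuffle_paths by blast
  show "transpose_path (p+q) ` shuffle_paths q p \<subseteq> shuffle_paths p q" using transpose_path_in_shuffle_paths[of _ q p] by (auto simp: add.commute)
qed

(* Both steps at a horizontal vertex advance the first coordinate, so deleting it leaves a simplex
  of \<Delta>(p-1) \<times> \<Delta>q; at every other vertex that is neither horizontal nor vertical the path turns. *)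
definition horizontal_vertex :: "nat \<Rightarrow> (nat \<Rightarrow> nat) \<Rightarrow> nat \<Rightarrow> bool" where
  "horizontal_vertex n a k \<longleftrightarrow> k \<le> n \<and> (k = 0 \<or> a k = Suc (a (k - 1))) \<and> (k = n \<or> a (Suc k) = Suc (a k))"

definition vertical_vertex :: "nat \<Rightarrow> (nat \<Rightarrow> nat) \<Rightarrow> nat \<Rightarrow> bool" where
  "vertical_vertex n a k \<longleftrightarrow> k \<le> n \<and> (k = 0 \<or> a k = a (k - 1)) \<and> (k = n \<or> a (Suc k) = a k)"

definition skip :: "nat \<Rightarrow> nat \<Rightarrow> nat" where
  "skip k i = (if i < k then i else Suc i)"

definition delete_vertex :: "nat \<Rightarrow> nat \<Rightarrow> (nat \<Rightarrow> nat) \<Rightarrow> nat \<Rightarrow> nat" where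
  "delete_vertex n k a = (\<lambda>i. if i < k then a i else if i < n then a (Suc i) - 1 else 0)"

(* Inverse of deleting a horizontal vertex: the step up to level j is reinserted at the first
  vertex where the path reaches j. *)
definition insert_index :: "nat \<Rightarrow> nat \<Rightarrow> (nat \<Rightarrow> nat) \<Rightarrow> nat" where
  "insert_index n j a = (LEAST k. k = n \<or> j \<le> a k)"

definition insert_vertex :: "nat \<Rightarrow> nat \<Rightarrow> (nat \<Rightarrow> nat) \<Rightarrow> nat \<Rightarrow> nat" where
  "insert_vertex n j a = (\<lambda>i. if i < insert_index n j a then a i else if i = insert_index n j a then j else if i \<le> n then Suc (a (i - 1)) else 0)"

lemma horizontal_vertex_less:
  assumes "a \<in> shuffle_paths p q" "horizontal_vertex (p+q) a k" "i < k"
  shows "a i < a k"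
proof -
  have "a i \<le> a (k - 1)" using shuffle_path_mono[OF assms(1), of i "k - 1"] assms horizontal_vertex_def by auto
  moreover have "a k = Suc (a (k - 1))" using assms(2,3) horizontal_vertex_def by auto
  ultimately show ?thesis by simp
qed

lemma horizontal_vertex_greater:
  assumes "a \<in> shuffle_paths p q" "horizontal_vertex (p+q) a k" "k < i" "i \<le> p+q"
  shows "a k < a i"
proof -
  have "a (Suc k) \<le> a i" using shuffle_path_mono[OF assms(1), of "Suc k" i] assms by auto
  moreover have "a (Suc k) = Suc (a k)" using assms horizontal_vertex_def by auto
  ultimately show ?thesis by simp
qed

lemma horizontal_vertex_first_pos:
  assumes "a \<in> shuffle_paths p q" "horizontal_vertex (p+q) a k" "p + q \<ge> 1"
  shows "p \<ge> 1"
proof (cases "k = 0")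
  case True
  then have "a 1 = 1" using assms shuffle_pathsD(1)[OF assms(1)] horizontal_vertex_def by auto
  then show ?thesis using shuffle_path_le[OF assms(1), of 1] by simp
next
  case False
  then have "a k \<ge> 1" using assms horizontal_vertex_def by auto
  then show ?thesis using shuffle_path_le[OF assms(1), of k] by simp
qed

lemma delete_vertex_in_shuffle_paths:
  assumes "a \<in> shuffle_paths p q" "horizontal_vertex (p+q) a k" "p \<ge> 1"
  shows "delete_vertex (p+q) k a \<in> shuffle_paths (p - 1) q"
proof -
  let ?n = "p+q"
  let ?d = "delete_vertex ?n k a"
  have k: "k \<le> ?n" using assms horizontal_vertex_def by auto
  have a0: "a 0 = 0" and an: "a ?n = p" using shuffle_pathsD[OF assms(1)] by auto
  have "?d 0 = 0"
  proof (cases "k = 0")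
    case True
    then have "a 1 = 1" using assms a0 horizontal_vertex_def by auto
    then show ?thesis using True assms(3) by (simp add: delete_vertex_def)
  next
    case False then show ?thesis using a0 by (simp add: delete_vertex_def)
  qed
  moreover have "?d (p - 1 + q) = p - 1"
  proof (cases "k = ?n")
    case True
    then have "a ?n = Suc (a (?n - 1))" using assms horizontal_vertex_def by auto
    then show ?thesis using True an assms(3) by (simp add: delete_vertex_def)
  next
    case False
    then have "?n - 1 \<ge> k" using k by simp
    then show ?thesis using an assms(3) by (simp add: delete_vertex_def)
  qed
  moreover have "?d (Suc i) = ?d i \<or> ?d (Suc i) = Suc (?d i)" if "i < p - 1 + q" for i
  proof -
    consider "Suc i < k" | "Suc i = k" | "i \<ge> k" by linarith
    then show ?thesis
    proof cases
      case 1 then show ?thesis using shuffle_pathsD(3)[OF assms(1), of i] that by (simp add: delete_vertex_def)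
    next
      case 2
      then have "a (Suc k) = Suc (a k)" "a k = Suc (a i)" using assms horizontal_vertex_def that by auto
      then show ?thesis using 2 that assms(3) by (auto simp: delete_vertex_def)
    next
      case 3
      have "Suc i \<le> p + q" using that by simp
      then have "a k < a (Suc i)" using horizontal_vertex_greater[OF assms(1,2), of "Suc i"] 3 by simp
      then have "a (Suc i) \<ge> 1" by simp
      then show ?thesis using shuffle_pathsD(3)[OF assms(1), of "Suc i"] that 3 assms(3) by (auto simp: delete_vertex_def)
    qed
  qed
  moreover have "\<forall>i>p - 1 + q. ?d i = 0" using k assms(3) by (auto simp: delete_vertex_def)
  ultimately show ?thesis by (simp add: shuffle_paths_def)
qed

lemma delete_vertex_skip:
  assumes "a \<in> shuffle_paths p q" "horizontal_vertex (p+q) a k" "i < p+q"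
  shows "a (skip k i) = skip (a k) (delete_vertex (p+q) k a i)" "skip k i - a (skip k i) = i - delete_vertex (p+q) k a i"
proof -
  have k: "k \<le> p+q" using assms horizontal_vertex_def by auto
  show "a (skip k i) = skip (a k) (delete_vertex (p+q) k a i)"
  proof (cases "i < k")
    case True then show ?thesis using horizontal_vertex_less[OF assms(1,2) True] by (simp add: skip_def skip_def delete_vertex_def)
  next
    case False
    then have "a k < a (Suc i)" using horizontal_vertex_greater[OF assms(1,2), of "Suc i"] assms(3) by simp
    then show ?thesis using False assms(3) by (simp add: skip_def skip_def delete_vertex_def)
  qed
  show "skip k i - a (skip k i) = i - delete_vertex (p+q) k a i"
  proof (cases "i < k")
    case True then show ?thesis by (simp add: skip_def delete_vertex_def)
  next
    case False
    then have "a k < a (Suc i)" using horizontal_vertex_greater[OF assms(1,2), of "Suc i"] assms(3) by simp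
    moreover have "a (Suc i) \<le> Suc i" using shuffle_path_le_index[OF assms(1), of "Suc i"] assms(3) by simp
    ultimately show ?thesis using False assms(3) by (simp add: skip_def delete_vertex_def)
  qed
qed

lemma insert_index_le: "insert_index n j b \<le> n"
  unfolding insert_index_def by (rule Least_le) simp

lemma less_insert_index:
  assumes "i < insert_index n j b"
  shows "b i < j \<and> i < n"
proof -
  have "\<not> (i = n \<or> j \<le> b i)"
    using not_less_Least[of i "\<lambda>k. k = n \<or> j \<le> b k"] assms unfolding insert_index_def by blast
  then show ?thesis using insert_index_le[of n j b] assms by auto
qed

lemma insert_index_props:
  assumes b: "b \<in> shuffle_paths (p - 1) q" and p: "p \<ge> 1" and j: "j \<le> p"
  defines "k \<equiv> insert_index (p+q) j b"
  shows "k \<le> p+q" "\<And>i. i < k \<Longrightarrow> b i < j \<and> i < p+q"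
    "k < p+q \<Longrightarrow> b k = j" "k = p+q \<Longrightarrow> j = p" "k > 0 \<Longrightarrow> b (k - 1) = j - 1 \<and> j \<ge> 1"
proof -
  let ?n = "p+q"
  have nn: "p - 1 + q = ?n - 1" using p by simp
  have ex: "k = ?n \<or> j \<le> b k" unfolding k_def insert_index_def by (rule LeastI[of _ ?n]) simp
  show k_le: "k \<le> ?n" unfolding k_def by (rule insert_index_le)
  show less_k: "b i < j \<and> i < ?n" if "i < k" for i using that unfolding k_def by (rule less_insert_index)
  show k_less: "b k = j" if "k < ?n"
  proof -
    have "j \<le> b k" using ex that by simp
    moreover have "b k \<le> j"
    proof (cases "k = 0")
      case True then show ?thesis using shuffle_pathsD(1)[OF b] by simp
    next
      case False
      then have "b (k - 1) < j" using less_k[of "k - 1"] by simp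
      moreover have "b k \<le> Suc (b (k - 1))" using shuffle_path_step[OF b, of "k - 1"] False that nn by simp
      ultimately show ?thesis by simp
    qed
    ultimately show ?thesis by simp
  qed
  show k_eq: "j = p" if "k = ?n"
  proof -
    have "?n \<ge> 1" using p by simp
    then have "b (?n - 1) < j" using less_k[of "?n - 1"] that by simp
    moreover have "b (?n - 1) = p - 1" using shuffle_pathsD(2)[OF b] nn by simp
    ultimately show ?thesis using j by simp
  qed
  show "b (k - 1) = j - 1 \<and> j \<ge> 1" if "k > 0"
  proof -
    have lt: "b (k - 1) < j" using less_k[of "k - 1"] that by simp
    show ?thesis
    proof (cases "k < ?n")
      case True
      then have "b k = j" using k_less by simp
      moreover have "b k \<le> Suc (b (k - 1))" using shuffle_path_step[OF b, of "k - 1"] that True nn by simp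
      ultimately show ?thesis using lt by simp
    next
      case False
      then have "k = ?n" using k_le by simp
      then have "j = p" using k_eq by simp
      moreover have "b (?n - 1) = p - 1" using shuffle_pathsD(2)[OF b] nn by simp
      ultimately show ?thesis using \<open>k = ?n\<close> p by simp
    qed
  qed
qed

lemma insert_vertex_in_shuffle_paths:
  assumes b: "b \<in> shuffle_paths (p - 1) q" and p: "p \<ge> 1" and j: "j \<le> p"
  shows "insert_vertex (p+q) j b \<in> shuffle_paths p q"
proof -
  let ?n = "p+q"
  let ?K = "insert_index ?n j b"
  let ?a = "insert_vertex ?n j b"
  note K = insert_index_props[OF b p j]
  have nn: "p - 1 + q = ?n - 1" using p by simp
  have b0: "b 0 = 0" and bn: "b (?n - 1) = p - 1" using shuffle_pathsD(1,2)[OF b] nn by auto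
  have "?a 0 = 0"
  proof (cases "?K = 0")
    case True
    then have "j = 0" using K(3) b0 p by (cases "?K < ?n") auto
    then show ?thesis using True by (simp add: insert_vertex_def)
  next
    case False then show ?thesis using b0 by (simp add: insert_vertex_def)
  qed
  moreover have "?a ?n = p"
  proof (cases "?K = ?n")
    case True then show ?thesis using K(4) by (simp add: insert_vertex_def)
  next
    case False
    then have "?K < ?n" using K(1) by simp
    then show ?thesis using bn p by (simp add: insert_vertex_def)
  qed
  moreover have "?a (Suc i) = ?a i \<or> ?a (Suc i) = Suc (?a i)" if "i < ?n" for i
  proof -
    consider "Suc i < ?K" | "Suc i = ?K" | "i = ?K" | "i > ?K" by linarith
    then show ?thesis
    proof cases
      case 1
      then have "i < ?n - 1" using K(2)[of "Suc i"] by auto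
      then have "b (Suc i) = b i \<or> b (Suc i) = Suc (b i)" using shuffle_pathsD(3)[OF b, of i] nn by simp
      then show ?thesis using 1 by (simp add: insert_vertex_def)
    next
      case 2
      then have "b i = j - 1" "j \<ge> 1" using K(5)[of] by (metis diff_Suc_1 zero_less_Suc)+
      then show ?thesis using 2 by (simp add: insert_vertex_def)
    next
      case 3 then show ?thesis using K(3) that by (simp add: insert_vertex_def)
    next
      case 4
      then have "i - 1 < ?n - 1" "Suc (i - 1) = i" using that by auto
      then show ?thesis using 4 shuffle_pathsD(3)[OF b, of "i - 1"] that nn by (auto simp: insert_vertex_def)
    qed
  qed
  moreover have "\<forall>i>?n. ?a i = 0" using K(1) by (simp add: insert_vertex_def)
  ultimately show ?thesis by (simp add: shuffle_paths_def)
qed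

lemma insert_vertex_props:
  assumes b: "b \<in> shuffle_paths (p - 1) q" and p: "p \<ge> 1" and j: "j \<le> p"
  shows "horizontal_vertex (p+q) (insert_vertex (p+q) j b) (insert_index (p+q) j b)"
    "delete_vertex (p+q) (insert_index (p+q) j b) (insert_vertex (p+q) j b) = b" "insert_vertex (p+q) j b (insert_index (p+q) j b) = j"
proof -
  let ?n = "p+q"
  let ?K = "insert_index ?n j b"
  let ?a = "insert_vertex ?n j b"
  note K = insert_index_props[OF b p j]
  have nn: "p - 1 + q = ?n - 1" using p by simp
  have bz: "\<And>i. i \<ge> ?n \<Longrightarrow> b i = 0" using shuffle_pathsD(4)[OF b] nn p by simp
  show "?a (insert_index ?n j b) = j" by (simp add: insert_vertex_def)
  show "horizontal_vertex ?n ?a ?K"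
  proof -
    have "?K = 0 \<or> ?a ?K = Suc (?a (?K - 1))" using K(5) by (auto simp: insert_vertex_def)
    moreover have "?K = ?n \<or> ?a (Suc ?K) = Suc (?a ?K)"
    proof (cases "?K < ?n")
      case True then show ?thesis using K(3) by (simp add: insert_vertex_def)
    qed (use K(1) in simp)
    ultimately show ?thesis using K(1) by (simp add: horizontal_vertex_def)
  qed
  show "delete_vertex ?n ?K ?a = b"
  proof
    fix i show "delete_vertex ?n ?K ?a i = b i"
    proof (cases "i < ?K")
      case True then show ?thesis by (simp add: delete_vertex_def insert_vertex_def)
    next
      case False
      show ?thesis
      proof (cases "i < ?n")
        case True then show ?thesis using False by (simp add: delete_vertex_def insert_vertex_def)
      next
        case False2: False
        then show ?thesis using False bz by (simp add: delete_vertex_def insert_vertex_def)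
      qed
    qed
  qed
qed

lemma insert_index_delete_vertex:
  assumes "a \<in> shuffle_paths p q" "horizontal_vertex (p+q) a k"
  shows "insert_index (p+q) (a k) (delete_vertex (p+q) k a) = k"
  unfolding insert_index_def
proof (rule Least_equality)
  have k: "k \<le> p+q" using assms horizontal_vertex_def by auto
  show "k = p+q \<or> a k \<le> delete_vertex (p+q) k a k"
  proof (cases "k < p+q")
    case True
    then have "a (Suc k) = Suc (a k)" using assms horizontal_vertex_def by auto
    then show ?thesis using True by (simp add: delete_vertex_def)
  qed (use k in simp)
  fix y assume y: "y = p+q \<or> a k \<le> delete_vertex (p+q) k a y"
  show "k \<le> y"
  proof (rule ccontr)
    assume "\<not> k \<le> y"
    then have "y < k" by simp
    then have "delete_vertex (p+q) k a y = a y" by (simp add: delete_vertex_def)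
    moreover have "a y < a k" using horizontal_vertex_less[OF assms \<open>y < k\<close>] .
    ultimately show False using y k \<open>y < k\<close> by auto
  qed
qed

lemma insert_vertex_delete_vertex:
  assumes "a \<in> shuffle_paths p q" "horizontal_vertex (p+q) a k"
  shows "insert_vertex (p+q) (a k) (delete_vertex (p+q) k a) = a"
proof
  fix i
  have k: "k \<le> p+q" using assms horizontal_vertex_def by auto
  have K: "insert_index (p+q) (a k) (delete_vertex (p+q) k a) = k" by (rule insert_index_delete_vertex[OF assms])
  show "insert_vertex (p+q) (a k) (delete_vertex (p+q) k a) i = a i"
  proof -
    consider "i < k" | "i = k" | "k < i" "i \<le> p+q" | "i > p+q" by linarith
    then show ?thesis
    proof cases
      case 3
      then have "a k < a i" using horizontal_vertex_greater[OF assms] by simp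
      moreover have "Suc (i - 1) = i" "\<not> (i - 1 < k)" "i - 1 < p+q" "\<not> i < k" "i \<noteq> k" using 3 by auto
      ultimately show ?thesis using 3 K by (simp add: insert_vertex_def delete_vertex_def)
    next
      case 4 then show ?thesis using K k shuffle_pathsD(4)[OF assms(1)] by (simp add: insert_vertex_def)
    qed (use K in \<open>simp_all add: insert_vertex_def delete_vertex_def\<close>)
  qed
qed

lemma bij_betw_delete_horizontal:
  assumes "p \<ge> 1"
  shows "bij_betw (\<lambda>(a,k). (a k, delete_vertex (p+q) k a))
           {(a,k). a \<in> shuffle_paths p q \<and> horizontal_vertex (p+q) a k}
           {(j,b). j \<le> p \<and> b \<in> shuffle_paths (p - 1) q}"
    (is "bij_betw ?del ?P ?J")
proof (rule bij_betw_byWitness[where f'="\<lambda>(j,b). (insert_vertex (p+q) j b, insert_index (p+q) j b)"])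
  let ?ins = "\<lambda>(j,b). (insert_vertex (p+q) j b, insert_index (p+q) j b)"
  show "\<forall>x\<in>?P. ?ins (?del x) = x"
    using insert_vertex_delete_vertex insert_index_delete_vertex by auto
  show "\<forall>y\<in>?J. ?del (?ins y) = y" "?ins ` ?J \<subseteq> ?P"
    using insert_vertex_in_shuffle_paths[OF _ assms] insert_vertex_props[OF _ assms] by auto
  show "?del ` ?P \<subseteq> ?J"
    using delete_vertex_in_shuffle_paths[OF _ _ assms] shuffle_path_le by auto
qed

lemma not_horizontal_and_vertical:
  assumes "a \<in> shuffle_paths p q" "p + q \<ge> 1"
  shows "\<not> (horizontal_vertex (p+q) a k \<and> vertical_vertex (p+q) a k)"
proof
  assume h: "horizontal_vertex (p+q) a k \<and> vertical_vertex (p+q) a k"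
  show False
  proof (cases "k = 0")
    case True
    then show False using h assms shuffle_pathsD(1)[OF assms(1)] unfolding horizontal_vertex_def vertical_vertex_def by auto
  next
    case False
    then show False using h unfolding horizontal_vertex_def vertical_vertex_def by auto
  qed
qed

lemma horizontal_transpose_iff_vertical:
  assumes "a \<in> shuffle_paths p q"
  shows "horizontal_vertex (p+q) (transpose_path (p+q) a) k \<longleftrightarrow> vertical_vertex (p+q) a k"
proof (cases "k \<le> p+q")
  case True
  have A: "(k = 0 \<or> transpose_path (p+q) a k = Suc (transpose_path (p+q) a (k - 1))) \<longleftrightarrow> (k = 0 \<or> a k = a (k - 1))"
  proof (cases "k = 0")
    case False
    have "a (k - 1) \<le> a k \<and> a k \<le> Suc (a (k - 1))" using shuffle_path_step[OF assms, of "k - 1"] False True by simp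
    moreover have "a k \<le> k" "a (k - 1) \<le> k - 1" using shuffle_path_le_index[OF assms] True by auto
    ultimately show ?thesis using False True by (auto simp: transpose_path_def)
  qed simp
  have B: "(k = p+q \<or> transpose_path (p+q) a (Suc k) = Suc (transpose_path (p+q) a k)) \<longleftrightarrow> (k = p+q \<or> a (Suc k) = a k)"
  proof (cases "k = p+q")
    case False
    then have kl: "k < p+q" using True by simp
    have "a k \<le> a (Suc k) \<and> a (Suc k) \<le> Suc (a k)" using shuffle_path_step[OF assms, of k] kl by simp
    moreover have "a k \<le> k" "a (Suc k) \<le> Suc k" using shuffle_path_le_index[OF assms] kl by auto
    ultimately show ?thesis using False kl by (auto simp: transpose_path_def)
  qed simp
  show ?thesis using A B True unfolding horizontal_vertex_def vertical_vertex_def by blast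
qed (auto simp: horizontal_vertex_def vertical_vertex_def)

lemma bij_betw_delete_vertical:
  assumes q: "qs \<ge> 1"
  shows "bij_betw
     (\<lambda>(a,k). (transpose_path (ps+qs) a k,
               transpose_path (ps+qs-1) (delete_vertex (ps+qs) k (transpose_path (ps+qs) a))))
     {(a,k). a \<in> shuffle_paths ps qs \<and> vertical_vertex (ps+qs) a k}
     {(j,c). j \<le> qs \<and> c \<in> shuffle_paths ps (qs - 1)}"
proof -
  let ?n = "ps+qs"
  let ?PB = "{(a,k). a \<in> shuffle_paths ps qs \<and> vertical_vertex ?n a k}"
  let ?PA = "{(a,k). a \<in> shuffle_paths qs ps \<and> horizontal_vertex (qs+ps) a k}"
  let ?J1 = "{(j,b). j \<le> qs \<and> b \<in> shuffle_paths (qs - 1) ps}"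
  let ?JB = "{(j,c). j \<le> qs \<and> c \<in> shuffle_paths ps (qs - 1)}"
  let ?tr = "\<lambda>(a,k). (transpose_path ?n a, k)"
  have b1: "bij_betw ?tr ?PB ?PA"
  proof (rule bij_betw_byWitness[where f'="?tr"])
    show "\<forall>x\<in>?PB. ?tr (?tr x) = x"
      using transpose_path_transpose_path by auto
    show "\<forall>x\<in>?PA. ?tr (?tr x) = x"
      using transpose_path_transpose_path[of _ qs ps] by (auto simp: add.commute)
    show "?tr ` ?PB \<subseteq> ?PA"
      using transpose_path_in_shuffle_paths horizontal_transpose_iff_vertical by (auto simp: add.commute)
    show "?tr ` ?PA \<subseteq> ?PB"
    proof
      fix y assume "y \<in> ?tr ` ?PA"
      then obtain a k where a: "a \<in> shuffle_paths qs ps" and k: "horizontal_vertex (qs+ps) a k"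
        and y: "y = (transpose_path ?n a, k)" by auto
      have a': "transpose_path ?n a \<in> shuffle_paths ps qs"
        using transpose_path_in_shuffle_paths[OF a] by (simp add: add.commute)
      have "transpose_path ?n (transpose_path ?n a) = a"
        using transpose_path_transpose_path[OF a] by (simp add: add.commute)
      then have "vertical_vertex ?n (transpose_path ?n a) k"
        using horizontal_transpose_iff_vertical[OF a', of k] k by (simp add: add.commute)
      then show "y \<in> ?PB" using a' y by simp
    qed
  qed
  have b2: "bij_betw (\<lambda>(a,k). (a k, delete_vertex (qs+ps) k a)) ?PA ?J1"
    by (rule bij_betw_delete_horizontal[OF q])
  have J: "?J1 = {..qs} \<times> shuffle_paths (qs - 1) ps" "?JB = {..qs} \<times> shuffle_paths ps (qs - 1)" by auto
  have b3: "bij_betw (\<lambda>(j,b). (j, transpose_path (?n - 1) b)) ?J1 ?JB"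
    unfolding J using bij_betw_map_snd[OF bij_betw_transpose_path[of "qs - 1" ps], of "{..qs}"] q
    by (simp add: add.commute)
  show ?thesis
    by (rule bij_betw_cong[THEN iffD1, OF _ bij_betw_trans[OF b1 bij_betw_trans[OF b2 b3]]])
      (auto simp: add.commute)
qed

(* Exchanging the two steps at a corner gives the other path with the same face at k. *)
definition flip_corner :: "nat \<Rightarrow> (nat \<Rightarrow> nat) \<Rightarrow> nat \<Rightarrow> nat" where
  "flip_corner k a = a(k := a (k - 1) + a (Suc k) - a k)"

lemma corner_vertex_shape:
  assumes "a \<in> shuffle_paths p q" "p + q \<ge> 1" "k \<le> p+q" "\<not> horizontal_vertex (p+q) a k" "\<not> vertical_vertex (p+q) a k"
  shows "0 < k" "k < p+q" "(a k = Suc (a (k - 1)) \<and> a (Suc k) = a k) \<or> (a k = a (k - 1) \<and> a (Suc k) = Suc (a k))"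
proof -
  show k0: "0 < k"
  proof (rule ccontr)
    assume "\<not> 0 < k"
    then have "k = 0" by simp
    have "0 < p + q" using assms(2) by linarith
    then have "a (Suc 0) = 0 \<or> a (Suc 0) = Suc 0" using shuffle_pathsD(3)[OF assms(1), of 0] shuffle_pathsD(1)[OF assms(1)] by simp
    then show False using assms(4,5) \<open>k = 0\<close> shuffle_pathsD(1)[OF assms(1)] unfolding horizontal_vertex_def vertical_vertex_def by auto
  qed
  show kn: "k < p+q"
  proof (rule ccontr)
    assume "\<not> k < p+q"
    then have "k = p+q" using assms(3) by simp
    then have "a k = a (k - 1) \<or> a k = Suc (a (k - 1))" using shuffle_pathsD(3)[OF assms(1), of "k - 1"] k0 by simp
    then show False using assms(4,5) \<open>k = p+q\<close> unfolding horizontal_vertex_def vertical_vertex_def by auto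
  qed
  have "a k = a (k - 1) \<or> a k = Suc (a (k - 1))" using shuffle_pathsD(3)[OF assms(1), of "k - 1"] k0 kn by simp
  moreover have "a (Suc k) = a k \<or> a (Suc k) = Suc (a k)" using shuffle_pathsD(3)[OF assms(1), of k] kn by simp
  ultimately show "(a k = Suc (a (k - 1)) \<and> a (Suc k) = a k) \<or> (a k = a (k - 1) \<and> a (Suc k) = Suc (a k))"
    using assms(4,5) k0 kn unfolding horizontal_vertex_def vertical_vertex_def by auto
qed

lemma flip_corner_props:
  assumes "a \<in> shuffle_paths p q" "p + q \<ge> 1" "k \<le> p+q" "\<not> horizontal_vertex (p+q) a k" "\<not> vertical_vertex (p+q) a k"
  shows "flip_corner k a \<in> shuffle_paths p q" "\<not> horizontal_vertex (p+q) (flip_corner k a) k" "\<not> vertical_vertex (p+q) (flip_corner k a) k"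
    "flip_corner k (flip_corner k a) = a" "flip_corner k a \<noteq> a" "\<And>i. i \<noteq> k \<Longrightarrow> flip_corner k a i = a i"
proof -
  note C = corner_vertex_shape[OF assms]
  have km: "k - 1 \<noteq> k" "Suc k \<noteq> k" using C(1) by auto
  show fi: "\<And>i. i \<noteq> k \<Longrightarrow> flip_corner k a i = a i" by (simp add: flip_corner_def)
  have fk: "flip_corner k a k = a (k - 1) + a (Suc k) - a k" by (simp add: flip_corner_def)
  show "flip_corner k a \<noteq> a" using C(3) fk by auto
  show "flip_corner k (flip_corner k a) = a" using C(3) km by (auto simp: flip_corner_def fun_eq_iff)
  have sh: "(flip_corner k a k = Suc (flip_corner k a (k - 1)) \<and> flip_corner k a (Suc k) = flip_corner k a k) \<or> (flip_corner k a k = flip_corner k a (k - 1) \<and> flip_corner k a (Suc k) = Suc (flip_corner k a k))"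
    using C(3) fk fi[OF km(1)] fi[OF km(2)] by auto
  show "\<not> horizontal_vertex (p+q) (flip_corner k a) k" using sh C(1,2) unfolding horizontal_vertex_def by auto
  show "\<not> vertical_vertex (p+q) (flip_corner k a) k" using sh C(1,2) unfolding vertical_vertex_def by auto
  have "flip_corner k a 0 = 0" "flip_corner k a (p+q) = p" using shuffle_pathsD(1,2)[OF assms(1)] C(1,2) fi by auto
  moreover have "\<forall>i>p+q. flip_corner k a i = 0" using shuffle_pathsD(4)[OF assms(1)] C(2) fi by auto
  moreover have "flip_corner k a (Suc i) = flip_corner k a i \<or> flip_corner k a (Suc i) = Suc (flip_corner k a i)" if "i < p+q" for i
  proof -
    consider "Suc i = k" | "i = k" | "Suc i \<noteq> k" "i \<noteq> k" by blast
    then show ?thesis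
    proof cases
      case 1 then have "i = k - 1" by simp
      then show ?thesis using sh 1 by auto
    next
      case 2 then show ?thesis using sh by auto
    next
      case 3 then show ?thesis using fi shuffle_pathsD(3)[OF assms(1) that] by simp
    qed
  qed
  ultimately show "flip_corner k a \<in> shuffle_paths p q" by (simp add: shuffle_paths_def)
qed



section \<open>Shuffle simplices composed with the Gauss map\<close>

definition simplex_vertex :: "nat \<Rightarrow> nat \<Rightarrow> real" where
  "simplex_vertex m = (\<lambda>i. if i = m then 1 else 0)"

definition first_vertices :: "(nat \<Rightarrow> nat) \<Rightarrow> nat \<Rightarrow> nat \<Rightarrow> real" where
  "first_vertices a = (\<lambda>i. simplex_vertex (a i))"

definition second_vertices :: "(nat \<Rightarrow> nat) \<Rightarrow> nat \<Rightarrow> nat \<Rightarrow> real" where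
  "second_vertices a = (\<lambda>i. simplex_vertex (i - a i))"

definition unit_diff :: "'a::real_normed_vector \<Rightarrow> 'a \<Rightarrow> 'a" where
  "unit_diff x y = (1 / norm (x - y)) *\<^sub>R (x - y)"

definition gauss_simplex :: "nat \<Rightarrow> ((nat \<Rightarrow> real) \<Rightarrow> 'a::real_normed_vector) \<Rightarrow> ((nat \<Rightarrow> real) \<Rightarrow> 'a)
    \<Rightarrow> (nat \<Rightarrow> nat \<Rightarrow> real) \<Rightarrow> (nat \<Rightarrow> nat \<Rightarrow> real) \<Rightarrow> (nat \<Rightarrow> real) \<Rightarrow> 'a" where
  "gauss_simplex n f h l1 l2 =
     (\<lambda>x\<in>standard_simplex n. unit_diff (f (oriented_simplex n l1 x)) (h (oriented_simplex n l2 x)))"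

definition gauss_shuffle :: "nat \<Rightarrow> ((nat \<Rightarrow> real) \<Rightarrow> 'a::real_normed_vector) \<Rightarrow> ((nat \<Rightarrow> real) \<Rightarrow> 'a)
    \<Rightarrow> (nat \<Rightarrow> nat) \<Rightarrow> (nat \<Rightarrow> real) \<Rightarrow> 'a" where
  "gauss_shuffle n f h a = gauss_simplex n f h (first_vertices a) (second_vertices a)"

lemma gauss_simplex_cong:
  assumes "\<And>i. i \<le> n \<Longrightarrow> l1 i = l1' i" "\<And>i. i \<le> n \<Longrightarrow> l2 i = l2' i"
  shows "gauss_simplex n f h l1 l2 = gauss_simplex n f h l1' l2'"
proof -
  have "oriented_simplex n l1 = oriented_simplex n l1'" "oriented_simplex n l2 = oriented_simplex n l2'"
    using assms by (auto simp: oriented_simplex_eq)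
  then show ?thesis by (simp add: gauss_simplex_def)
qed

lemma singular_face_gauss_simplex:
  assumes "1 \<le> n" "k \<le> n"
  shows "singular_face n k (gauss_simplex n f h l1 l2) = gauss_simplex (n - 1) f h (l1 \<circ> skip k) (l2 \<circ> skip k)"
proof -
  have e: "(\<lambda>j. if j < k then l j else l (Suc j)) = l \<circ> skip k" for l :: "nat \<Rightarrow> nat \<Rightarrow> real"
    by (auto simp: skip_def fun_eq_iff)
  have os: "oriented_simplex n l (simplical_face k x) = oriented_simplex (n - 1) (l \<circ> skip k) x"
    if "x \<in> standard_simplex (n - 1)" for l x
  proof -
    have "singular_face n k (oriented_simplex n l) = oriented_simplex (n - 1) (l \<circ> skip k)"
    proof -
      have ee: "l \<circ> skip k = (\<lambda>j. if j < k then l j else l (Suc j))" by (auto simp: skip_def fun_eq_iff)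
      show ?thesis unfolding ee using singular_face_oriented_simplex[OF assms, of l] by simp
    qed
    then have "singular_face n k (oriented_simplex n l) x = oriented_simplex (n - 1) (l \<circ> skip k) x" by simp
    then show ?thesis using that by (simp add: singular_face_def)
  qed
  show ?thesis
  proof
    fix x
    show "singular_face n k (gauss_simplex n f h l1 l2) x = gauss_simplex (n - 1) f h (l1 \<circ> skip k) (l2 \<circ> skip k) x"
    proof (cases "x \<in> standard_simplex (n - 1)")
      case True
      then have "simplical_face k x \<in> standard_simplex n"
        using simplical_face_in_standard_simplex[OF assms] by simp
      then show ?thesis using True os[OF True, of l1] os[OF True, of l2] by (simp add: singular_face_def gauss_simplex_def)
    next
      case False then show ?thesis by (simp add: singular_face_def gauss_simplex_def)
    qed
  qed
qed

lemma simplical_face_oriented_simplex: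
  assumes "x \<in> standard_simplex m"
  shows "simplical_face j (oriented_simplex m l x) = oriented_simplex m (\<lambda>i. simplical_face j (l i)) x"
  using assms by (auto simp: simplical_face_def oriented_simplex_def fun_eq_iff)

lemma simplical_face_simplex_vertex: "simplical_face j (simplex_vertex m) = simplex_vertex (skip j m)"
  by (auto simp: simplical_face_def simplex_vertex_def skip_def fun_eq_iff)

lemma gauss_simplex_singular_face_first:
  assumes "\<And>x. x \<in> standard_simplex m \<Longrightarrow> oriented_simplex m l1 x \<in> standard_simplex (p - 1)"
  shows "gauss_simplex m (singular_face p j f) h l1 l2 = gauss_simplex m f h (\<lambda>i. simplical_face j (l1 i)) l2"
proof
  fix x show "gauss_simplex m (singular_face p j f) h l1 l2 x = gauss_simplex m f h (\<lambda>i. simplical_face j (l1 i)) l2 x"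
    using assms[of x] simplical_face_oriented_simplex[of x m j l1] by (simp add: gauss_simplex_def singular_face_def)
qed

lemma gauss_simplex_singular_face_second:
  assumes "\<And>x. x \<in> standard_simplex m \<Longrightarrow> oriented_simplex m l2 x \<in> standard_simplex (q - 1)"
  shows "gauss_simplex m f (singular_face q j h) l1 l2 = gauss_simplex m f h l1 (\<lambda>i. simplical_face j (l2 i))"
proof
  fix x show "gauss_simplex m f (singular_face q j h) l1 l2 x = gauss_simplex m f h l1 (\<lambda>i. simplical_face j (l2 i)) x"
    using assms[of x] simplical_face_oriented_simplex[of x m j l2] by (simp add: gauss_simplex_def singular_face_def)
qed

lemma oriented_simplex_in_standard_simplex:
  assumes "\<And>i. i \<le> n \<Longrightarrow> l i \<in> standard_simplex p" "x \<in> standard_simplex n"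
  shows "oriented_simplex n l x \<in> standard_simplex p"
proof -
  have x: "\<And>i. 0 \<le> x i" "sum x {..n} = 1" using assms(2) by (auto simp: standard_simplex_def)
  have l: "\<And>i t. i \<le> n \<Longrightarrow> 0 \<le> l i t \<and> l i t \<le> 1" "\<And>i t. i \<le> n \<Longrightarrow> t > p \<Longrightarrow> l i t = 0"
    "\<And>i. i \<le> n \<Longrightarrow> (\<Sum>t\<le>p. l i t) = 1" using assms(1) by (auto simp: standard_simplex_def)
  have "0 \<le> (\<Sum>j\<le>n. l j t * x j)" for t by (rule sum_nonneg) (use l x in simp)
  moreover have "(\<Sum>j\<le>n. l j t * x j) \<le> 1" for t
  proof -
    have "(\<Sum>j\<le>n. l j t * x j) \<le> (\<Sum>j\<le>n. x j)"
      by (rule sum_mono) (use l x in \<open>simp add: mult_left_le_one_le\<close>)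
    then show ?thesis using x by simp
  qed
  moreover have "(\<Sum>j\<le>n. l j t * x j) = 0" if "t > p" for t using l that by simp
  moreover have "(\<Sum>t\<le>p. \<Sum>j\<le>n. l j t * x j) = 1"
  proof -
    have "(\<Sum>t\<le>p. \<Sum>j\<le>n. l j t * x j) = (\<Sum>j\<le>n. (\<Sum>t\<le>p. l j t) * x j)"
      by (simp add: sum.swap[of _ "{..p}"] sum_distrib_right)
    also have "\<dots> = (\<Sum>j\<le>n. x j)" using l by simp
    finally show ?thesis using x by simp
  qed
  ultimately show ?thesis using assms(2) by (simp add: oriented_simplex_def standard_simplex_def)
qed

lemma simplex_vertex_in_standard_simplex: "m \<le> p \<Longrightarrow> simplex_vertex m \<in> standard_simplex p"
  by (simp add: basis_in_standard_simplex simplex_vertex_def)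

lemma oriented_simplex_first_vertices:
  assumes "a \<in> shuffle_paths p q" "x \<in> standard_simplex (p+q)"
  shows "oriented_simplex (p+q) (first_vertices a) x \<in> standard_simplex p"
  by (rule oriented_simplex_in_standard_simplex[OF _ assms(2)])
    (use shuffle_path_le[OF assms(1)] simplex_vertex_in_standard_simplex in \<open>simp add: first_vertices_def\<close>)

lemma oriented_simplex_second_vertices:
  assumes "a \<in> shuffle_paths p q" "x \<in> standard_simplex (p+q)"
  shows "oriented_simplex (p+q) (second_vertices a) x \<in> standard_simplex q"
  by (rule oriented_simplex_in_standard_simplex[OF _ assms(2)])
    (use shuffle_path_index_diff_le[OF assms(1)] simplex_vertex_in_standard_simplex
      in \<open>simp add: second_vertices_def\<close>)

lemma continuous_map_unit_diff:
  fixes u v :: "'b \<Rightarrow> 'a::real_normed_vector"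
  assumes u: "continuous_map X euclidean u" and v: "continuous_map X euclidean v"
    and uv: "\<And>x. x \<in> topspace X \<Longrightarrow> u x \<noteq> v x"
  shows "continuous_map X (top_of_set (sphere 0 1)) (\<lambda>x. unit_diff (u x) (v x))"
proof -
  have d: "continuous_map X (top_of_set (- {0})) (\<lambda>x. u x - v x)"
    by (rule continuous_map_into_subtopology[OF continuous_map_diff[OF u v]]) (use uv in auto)
  have "continuous_on (- {0}) (\<lambda>w::'a. (1 / norm w) *\<^sub>R w)"
    by (intro continuous_intros) auto
  then have "continuous_map (top_of_set (- {0})) euclidean (\<lambda>w::'a. (1 / norm w) *\<^sub>R w)"
    by (simp add: continuous_map_iff_continuous)
  from continuous_map_compose[OF d this]
  have "continuous_map X euclidean (\<lambda>x. unit_diff (u x) (v x))"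
    by (simp add: o_def unit_diff_def)
  then show ?thesis
    by (rule continuous_map_into_subtopology) (use uv in \<open>auto simp: unit_diff_def\<close>)
qed

lemma continuous_map_singular_oriented_simplex:
  assumes f: "singular_simplex p euclidean f"
    and l: "\<And>x. x \<in> standard_simplex n \<Longrightarrow> oriented_simplex n l x \<in> standard_simplex p"
  shows "continuous_map (subtopology (powertop_real UNIV) (standard_simplex n)) euclidean
           (\<lambda>x. f (oriented_simplex n l x))"
proof -
  have "simplicial_simplex n (standard_simplex p) (oriented_simplex n l)"
    unfolding simplicial_simplex using l by blast
  then have "continuous_map (subtopology (powertop_real UNIV) (standard_simplex n))
      (subtopology (powertop_real UNIV) (standard_simplex p)) (oriented_simplex n l)"
    using simplicial_imp_singular_simplex singular_simplex_def by blast
  moreover have "continuous_map (subtopology (powertop_real UNIV) (standard_simplex p)) euclidean f"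
    using f by (simp add: singular_simplex_def)
  ultimately show ?thesis
    using continuous_map_compose by (fastforce simp: o_def)
qed

lemma singular_simplex_gauss_shuffle:
  fixes f h :: "(nat \<Rightarrow> real) \<Rightarrow> 'a::real_normed_vector"
  assumes a: "a \<in> shuffle_paths p q" and f: "singular_simplex p euclidean f" and h: "singular_simplex q euclidean h"
    and disj: "\<And>y z. y \<in> standard_simplex p \<Longrightarrow> z \<in> standard_simplex q \<Longrightarrow> f y \<noteq> h z"
  shows "singular_simplex (p+q) (top_of_set (sphere 0 1)) (gauss_shuffle (p+q) f h a)"
proof -
  let ?X = "subtopology (powertop_real UNIV) (standard_simplex (p+q))"
  have "continuous_map ?X (top_of_set (sphere 0 1))
      (\<lambda>x. unit_diff (f (oriented_simplex (p+q) (first_vertices a) x)) (h (oriented_simplex (p+q) (second_vertices a) x)))"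
    by (intro continuous_map_unit_diff continuous_map_singular_oriented_simplex[OF f]
          continuous_map_singular_oriented_simplex[OF h] disj
          oriented_simplex_first_vertices[OF a] oriented_simplex_second_vertices[OF a]) auto
  then have "continuous_map ?X (top_of_set (sphere 0 1)) (gauss_shuffle (p+q) f h a)"
    by (rule continuous_map_eq) (simp add: gauss_shuffle_def gauss_simplex_def)
  then show ?thesis
    by (simp add: singular_simplex_def gauss_shuffle_def gauss_simplex_def)
qed

lemma unit_diff_commute: "unit_diff y x = - unit_diff x y"
  unfolding unit_diff_def by (metis minus_diff_eq norm_minus_commute scaleR_minus_right)

lemma gauss_shuffle_transpose:
  assumes a: "a \<in> shuffle_paths p q"
  shows "gauss_shuffle (p+q) h f (transpose_path (p+q) a) = simplex_map (p+q) uminus (gauss_shuffle (p+q) f h a)"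
proof -
  have "gauss_shuffle (p+q) h f (transpose_path (p+q) a) = gauss_simplex (p+q) h f (second_vertices a) (first_vertices a)"
    unfolding gauss_shuffle_def
  proof (rule gauss_simplex_cong)
    fix i assume "i \<le> p+q"
    then show "first_vertices (transpose_path (p+q) a) i = second_vertices a i" "second_vertices (transpose_path (p+q) a) i = first_vertices a i"
      using shuffle_path_le_index[OF a, of i] by (auto simp: first_vertices_def second_vertices_def transpose_path_def)
  qed
  also have "\<dots> = simplex_map (p+q) uminus (gauss_shuffle (p+q) f h a)"
  proof (rule ext)
    fix x
    show "gauss_simplex (p+q) h f (second_vertices a) (first_vertices a) x = simplex_map (p+q) uminus (gauss_shuffle (p+q) f h a) x"
      using unit_diff_commute[of "h (oriented_simplex (p+q) (second_vertices a) x)" "f (oriented_simplex (p+q) (first_vertices a) x)"]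
      by (simp add: gauss_simplex_def gauss_shuffle_def simplex_map_def)
  qed
  finally show ?thesis .
qed

lemma simplex_map_uminus_uminus:
  assumes "c \<in> extensional (standard_simplex n)"
  shows "simplex_map n uminus (simplex_map n (uminus :: 'a::ab_group_add \<Rightarrow> 'a) c) = c"
  using assms by (auto simp: simplex_map_def fun_eq_iff extensional_def)

lemma inj_simplex_map_uminus: "inj_on (simplex_map n (uminus :: 'a::ab_group_add \<Rightarrow> 'a)) (extensional (standard_simplex n))"
  by (metis inj_onI simplex_map_uminus_uminus)

lemma singular_face_gauss_shuffle_horizontal:
  assumes a: "a \<in> shuffle_paths p q" and U: "horizontal_vertex (p+q) a k" and p: "1 \<le> p"
  shows "singular_face (p+q) k (gauss_shuffle (p+q) f h a) = gauss_shuffle (p+q-1) (singular_face p (a k) f) h (delete_vertex (p+q) k a)"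
proof -
  let ?n = "p+q"
  let ?b = "delete_vertex ?n k a"
  have k: "k \<le> ?n" using U horizontal_vertex_def by auto
  have b: "?b \<in> shuffle_paths (p - 1) q" by (rule delete_vertex_in_shuffle_paths[OF a U p])
  have nn: "p - 1 + q = ?n - 1" using p by simp
  have "singular_face ?n k (gauss_shuffle ?n f h a) = gauss_simplex (?n - 1) f h (first_vertices a \<circ> skip k) (second_vertices a \<circ> skip k)"
    unfolding gauss_shuffle_def by (rule singular_face_gauss_simplex) (use p k in auto)
  also have "\<dots> = gauss_simplex (?n - 1) f h (\<lambda>i. simplical_face (a k) (first_vertices ?b i)) (second_vertices ?b)"
  proof (rule gauss_simplex_cong)
    fix i assume i: "i \<le> ?n - 1"
    then have "i < ?n" using p by simp
    note r = delete_vertex_skip[OF a U this]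
    show "(first_vertices a \<circ> skip k) i = simplical_face (a k) (first_vertices ?b i)" using r(1) by (simp add: first_vertices_def simplical_face_simplex_vertex)
    show "(second_vertices a \<circ> skip k) i = second_vertices ?b i" using r(2) by (simp add: second_vertices_def)
  qed
  also have "\<dots> = gauss_simplex (?n - 1) (singular_face p (a k) f) h (first_vertices ?b) (second_vertices ?b)"
  proof (rule gauss_simplex_singular_face_first[symmetric])
    fix x assume "x \<in> standard_simplex (?n - 1)"
    then show "oriented_simplex (?n - 1) (first_vertices ?b) x \<in> standard_simplex (p - 1)"
      using oriented_simplex_first_vertices[OF b] nn by simp
  qed
  finally show ?thesis by (simp add: gauss_shuffle_def)
qed

lemma singular_face_gauss_shuffle_vertical:
  assumes a: "a \<in> shuffle_paths p q" and U: "vertical_vertex (p+q) a k" and q: "1 \<le> q"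
  shows "singular_face (p+q) k (gauss_shuffle (p+q) f h a)
     = gauss_shuffle (p+q-1) f (singular_face q (transpose_path (p+q) a k) h) (transpose_path (p+q-1) (delete_vertex (p+q) k (transpose_path (p+q) a)))"
proof -
  let ?n = "p+q"
  let ?a' = "transpose_path ?n a"
  let ?b = "delete_vertex ?n k ?a'"
  let ?c = "transpose_path (?n - 1) ?b"
  have k: "k \<le> ?n" using U vertical_vertex_def by auto
  have a': "?a' \<in> shuffle_paths q p" by (rule transpose_path_in_shuffle_paths[OF a])
  have U': "horizontal_vertex (q+p) ?a' k" using horizontal_transpose_iff_vertical[OF a] U by (simp add: add.commute)
  have b: "?b \<in> shuffle_paths (q - 1) p" using delete_vertex_in_shuffle_paths[OF a' U' q] by (simp add: add.commute)
  have nn: "q - 1 + p = ?n - 1" using q by simp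
  have c: "?c \<in> shuffle_paths p (q - 1)" using transpose_path_in_shuffle_paths[OF b] nn by simp
  have "singular_face ?n k (gauss_shuffle ?n f h a) = gauss_simplex (?n - 1) f h (first_vertices a \<circ> skip k) (second_vertices a \<circ> skip k)"
    unfolding gauss_shuffle_def by (rule singular_face_gauss_simplex) (use q k in auto)
  also have "\<dots> = gauss_simplex (?n - 1) f h (first_vertices ?c) (\<lambda>i. simplical_face (?a' k) (second_vertices ?c i))"
  proof (rule gauss_simplex_cong)
    fix i assume i: "i \<le> ?n - 1"
    then have il: "i < q+p" using q by simp
    note r = delete_vertex_skip[OF a' U' il]
    have skip: "skip k i \<le> ?n" using il k by (auto simp: skip_def)
    have a1: "a (skip k i) \<le> skip k i" using shuffle_path_le_index[OF a skip] .
    have t1: "?a' (skip k i) = skip k i - a (skip k i)" using skip by (simp add: transpose_path_def)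
    have bi: "?b i \<le> i" using shuffle_path_le_index[OF b, of i] i nn by simp
    have e1: "a (skip k i) = i - ?b i" using r(2) t1 a1 by (simp add: add.commute)
    have e2: "skip k i - a (skip k i) = skip (?a' k) (?b i)" using r(1) t1 by (simp add: add.commute)
    show "(first_vertices a \<circ> skip k) i = first_vertices ?c i" using e1 i by (simp add: first_vertices_def transpose_path_def)
    show "(second_vertices a \<circ> skip k) i = simplical_face (?a' k) (second_vertices ?c i)"
      using e2 i bi by (simp add: second_vertices_def transpose_path_def simplical_face_simplex_vertex)
  qed
  also have "\<dots> = gauss_simplex (?n - 1) f (singular_face q (?a' k) h) (first_vertices ?c) (second_vertices ?c)"
  proof (rule gauss_simplex_singular_face_second[symmetric])
    fix x assume "x \<in> standard_simplex (?n - 1)"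
    then show "oriented_simplex (?n - 1) (second_vertices ?c) x \<in> standard_simplex (q - 1)"
      using oriented_simplex_second_vertices[OF c] q by simp
  qed
  finally show ?thesis by (simp add: gauss_shuffle_def)
qed



section \<open>The chain map on the deleted product\<close>

definition simplex_chain :: "'v set set \<Rightarrow> (nat \<Rightarrow> 'v set set \<Rightarrow> 'c set) \<Rightarrow> 'v set \<Rightarrow> 'c set" where
  "simplex_chain K \<gamma> \<sigma> = (if \<sigma> \<in> K then \<gamma> (card \<sigma> - 1) {\<sigma>} else {})"

definition facets :: "'v set set \<Rightarrow> 'v set \<Rightarrow> 'v set set" where
  "facets K \<sigma> = {\<sigma>'\<in>K. \<sigma>' \<subseteq> \<sigma> \<and> card \<sigma> = Suc (card \<sigma>')}"

lemma simplicial_complexD: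
  assumes "finite_simplicial_complex K" "\<sigma> \<in> K"
  shows "finite \<sigma>" "\<sigma> \<noteq> {}" "card \<sigma> \<ge> 1" "finite K"
  using assms by (auto simp: finite_simplicial_complex_def Suc_le_eq card_gt_0_iff)

lemma facetsD:
  assumes "finite_simplicial_complex K" "s \<in> facets K \<sigma>" "card \<sigma> = Suc ps"
  shows "card s = ps" "ps \<ge> 1" "s \<in> K"
proof -
  show "card s = ps" "s \<in> K" using assms(2,3) by (auto simp: facets_def)
  then show "ps \<ge> 1" using simplicial_complexD(3)[OF assms(1)] by fastforce
qed

lemma finite_facets:
  assumes "finite_simplicial_complex K" "\<sigma> \<in> K"
  shows "finite (facets K \<sigma>)"
proof -
  have "facets K \<sigma> \<subseteq> K" by (auto simp: facets_def)
  then show ?thesis using simplicial_complexD(4)[OF assms] finite_subset by blast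
qed

lemma hom_almost_embedding_chain_map:
  assumes "hom_almost_embedding K \<gamma>"
  shows "zchain_map (ksimp K) (kbd K) (euclidean :: (real^'n) topology) (\<gamma> :: nat \<Rightarrow> 'v set set \<Rightarrow> ((nat \<Rightarrow> real) \<Rightarrow> real^'n) set)"
  using assms by (simp add: hom_almost_embedding_def)

lemma zchain_map_zchain:
  assumes "zchain_map cells bd X \<gamma>" "A \<subseteq> cells p"
  shows "zchain p X (\<gamma> p A)"
  using assms unfolding zchain_map_def by blast

lemma zchain_map_boundary:
  assumes "zchain_map cells bd X \<gamma>" "A \<subseteq> cells (Suc p)"
  shows "sbd (Suc p) (\<gamma> (Suc p) A) = \<gamma> p (bd A)"
  using assms unfolding zchain_map_def by blast

lemma singleton_ksimp:
  assumes "finite_simplicial_complex K" "\<sigma> \<in> K"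
  shows "{\<sigma>} \<subseteq> ksimp K (card \<sigma> - 1)"
  using simplicial_complexD[OF assms] assms by (simp add: ksimp_def)

lemma finite_simplex_chain:
  assumes "finite_simplicial_complex K" "hom_almost_embedding K \<gamma>"
  shows "finite (simplex_chain K \<gamma> \<sigma>)"
proof (cases "\<sigma> \<in> K")
  case True
  have "zchain (card \<sigma> - 1) euclidean (\<gamma> (card \<sigma> - 1) {\<sigma>})"
    by (rule zchain_map_zchain[OF hom_almost_embedding_chain_map[OF assms(2)] singleton_ksimp[OF assms(1) True]])
  then show ?thesis using True by (simp add: simplex_chain_def zchain_def)
qed (simp add: simplex_chain_def)

lemma simplex_chainD:
  assumes "finite_simplicial_complex K" "hom_almost_embedding K \<gamma>" "f \<in> simplex_chain K \<gamma> \<sigma>"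
  shows "singular_simplex (card \<sigma> - 1) euclidean f" "\<sigma> \<in> K"
proof -
  show K: "\<sigma> \<in> K" using assms(3) by (simp add: simplex_chain_def split: if_splits)
  have "zchain (card \<sigma> - 1) euclidean (\<gamma> (card \<sigma> - 1) {\<sigma>})"
    by (rule zchain_map_zchain[OF hom_almost_embedding_chain_map[OF assms(2)] singleton_ksimp[OF assms(1) K]])
  then show "singular_simplex (card \<sigma> - 1) euclidean f" using assms(3) K by (simp add: simplex_chain_def zchain_def)
qed

lemma simplex_chain_disjoint:
  assumes "hom_almost_embedding K \<gamma>" "\<sigma> \<inter> \<tau> = {}" "f \<in> simplex_chain K \<gamma> \<sigma>" "h \<in> simplex_chain K \<gamma> \<tau>"
    "y \<in> standard_simplex (card \<sigma> - 1)" "z \<in> standard_simplex (card \<tau> - 1)"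
  shows "f y \<noteq> h z"
proof -
  have K: "\<sigma> \<in> K" "\<tau> \<in> K" using assms(3,4) by (simp_all add: simplex_chain_def split: if_splits)
  have "ssupp (card \<sigma> - 1) (\<gamma> (card \<sigma> - 1) {\<sigma>}) \<inter> ssupp (card \<tau> - 1) (\<gamma> (card \<tau> - 1) {\<tau>}) = {}"
    using assms(1,2) K unfolding hom_almost_embedding_def by blast
  moreover have "f y \<in> ssupp (card \<sigma> - 1) (\<gamma> (card \<sigma> - 1) {\<sigma>})" using assms(3,5) K by (auto simp: ssupp_def simplex_chain_def)
  moreover have "h z \<in> ssupp (card \<tau> - 1) (\<gamma> (card \<tau> - 1) {\<tau>})" using assms(4,6) K by (auto simp: ssupp_def simplex_chain_def)
  ultimately show ?thesis by auto
qed

lemma kbd_singleton: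
  assumes "\<sigma> \<in> K"
  shows "kbd K {\<sigma>} = facets K \<sigma>"
proof -
  have "{s\<in>{\<sigma>}. \<tau> \<subseteq> s \<and> card s = Suc (card \<tau>)} = (if \<tau> \<subseteq> \<sigma> \<and> card \<sigma> = Suc (card \<tau>) then {\<sigma>} else {})" for \<tau>
    by auto
  then show ?thesis by (auto simp: kbd_def facets_def)
qed

lemma boundary_simplex_chain:
  assumes fsc: "finite_simplicial_complex K" and hae: "hom_almost_embedding K \<gamma>"
    and K: "\<sigma> \<in> K" and P: "card \<sigma> = Suc P" "P \<ge> 1"
  shows "z2_sum (simplex_chain K \<gamma> \<sigma> \<times> {..P}) (\<lambda>(f,j). singular_face P j f) = z2_sum (Sigma (facets K \<sigma>) (simplex_chain K \<gamma>)) snd"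
proof -
  note Z = hom_almost_embedding_chain_map[OF hae]
  have G: "simplex_chain K \<gamma> \<sigma> = \<gamma> (Suc (P - 1)) {\<sigma>}" using K P by (simp add: simplex_chain_def)
  have "z2_sum (simplex_chain K \<gamma> \<sigma> \<times> {..P}) (\<lambda>(f,j). singular_face P j f) = sbd P (simplex_chain K \<gamma> \<sigma>)"
    using sbd_as_z2_sum[OF finite_simplex_chain[OF fsc hae], of P \<sigma>] P by simp
  also have "\<dots> = sbd (Suc (P - 1)) (\<gamma> (Suc (P - 1)) {\<sigma>})" using G P by simp
  also have "\<dots> = \<gamma> (P - 1) (kbd K {\<sigma>})"
    by (rule zchain_map_boundary[OF Z]) (use K P in \<open>simp add: ksimp_def\<close>)
  also have "\<dots> = \<gamma> (P - 1) (facets K \<sigma>)" using kbd_singleton[OF K] by simp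
  also have "\<dots> = z2_sum (Sigma (facets K \<sigma>) (\<lambda>s. \<gamma> (P - 1) {s})) snd"
  proof (rule zchain_map_as_z2_sum[OF Z])
    have "facets K \<sigma> \<subseteq> K" by (auto simp: facets_def)
    then show "finite (facets K \<sigma>)" using simplicial_complexD(4)[OF fsc K] finite_subset by blast
    show "facets K \<sigma> \<subseteq> ksimp K (P - 1)" using P by (auto simp: facets_def ksimp_def)
  qed
  also have "\<dots> = z2_sum (Sigma (facets K \<sigma>) (simplex_chain K \<gamma>)) snd"
  proof -
    have "Sigma (facets K \<sigma>) (\<lambda>s. \<gamma> (P - 1) {s}) = Sigma (facets K \<sigma>) (simplex_chain K \<gamma>)"
      using P by (auto simp: facets_def simplex_chain_def)
    then show ?thesis by simp
  qed
  finally show ?thesis .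
qed

definition cell_terms :: "'v set set \<Rightarrow> (nat \<Rightarrow> 'v set set \<Rightarrow> ((nat \<Rightarrow> real) \<Rightarrow> 'a) set) \<Rightarrow> 'v set \<times> 'v set
    \<Rightarrow> (((nat \<Rightarrow> real) \<Rightarrow> 'a) \<times> ((nat \<Rightarrow> real) \<Rightarrow> 'a) \<times> (nat \<Rightarrow> nat)) set" where
  "cell_terms K \<gamma> c = simplex_chain K \<gamma> (fst c) \<times> simplex_chain K \<gamma> (snd c) \<times> shuffle_paths (card (fst c) - 1) (card (snd c) - 1)"

definition cell_chain :: "'v set set \<Rightarrow> (nat \<Rightarrow> 'v set set \<Rightarrow> ((nat \<Rightarrow> real) \<Rightarrow> 'a::real_normed_vector) set) \<Rightarrow> 'v set \<times> 'v set
    \<Rightarrow> ((nat \<Rightarrow> real) \<Rightarrow> 'a) set" where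
  "cell_chain K \<gamma> c = z2_sum (cell_terms K \<gamma> c) (\<lambda>(f,h,a). gauss_shuffle (card (fst c) - 1 + (card (snd c) - 1)) f h a)"

lemma finite_cell_terms:
  assumes "finite_simplicial_complex K" "hom_almost_embedding K \<gamma>"
  shows "finite (cell_terms K \<gamma> d)"
  using finite_simplex_chain[OF assms] finite_shuffle_paths by (simp add: cell_terms_def)

lemma finite_cell_chain:
  assumes "finite_simplicial_complex K" "hom_almost_embedding K \<gamma>"
  shows "finite (cell_chain K \<gamma> c)"
  unfolding cell_chain_def by (rule finite_z2_sum[OF finite_cell_terms[OF assms]])

lemma z2_sum_substitute_boundary:
  fixes P :: nat
  assumes "finite S1" "finite S2" "finite B" "finite F1" "\<And>x. finite (\<Gamma> x)"
    and E: "z2_sum (S1 \<times> {..P}) (\<lambda>(f,j). fc j f) = z2_sum (Sigma F1 \<Gamma>) snd"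
  shows "z2_sum ((S1 \<times> {..P}) \<times> (S2 \<times> B)) (\<lambda>((f,j),(h,b)). \<Psi> (fc j f) h b)
       = z2_sum (Sigma F1 \<Gamma> \<times> (S2 \<times> B)) (\<lambda>((s,f'),(h,b)). \<Psi> f' h b)"
proof -
  let ?\<phi> = "\<lambda>(f,j). fc j f"
  let ?\<Psi> = "\<lambda>(x,(h,b)). \<Psi> x h b"
  have f1: "finite (S1 \<times> {..P})" using assms(1) by simp
  have f2: "finite (Sigma F1 \<Gamma>)" using assms(4,5) by simp
  have "z2_sum ((S1 \<times> {..P}) \<times> (S2 \<times> B)) (\<lambda>((f,j),(h,b)). \<Psi> (fc j f) h b)
      = z2_sum (Sigma (S1 \<times> {..P}) (\<lambda>i. (\<lambda>_. S2 \<times> B) (?\<phi> i))) (\<lambda>(i,t). ?\<Psi> (?\<phi> i, t))"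
    by (rule z2_sum_cong) auto
  also have "\<dots> = z2_sum (Sigma (z2_sum (S1 \<times> {..P}) ?\<phi>) (\<lambda>_. S2 \<times> B)) ?\<Psi>"
    by (rule z2_sum_Sigma_outer[symmetric]) (use f1 assms(1-5) in auto)
  also have "\<dots> = z2_sum (Sigma (z2_sum (Sigma F1 \<Gamma>) snd) (\<lambda>_. S2 \<times> B)) ?\<Psi>" using E by simp
  also have "\<dots> = z2_sum (Sigma (Sigma F1 \<Gamma>) (\<lambda>i. (\<lambda>_. S2 \<times> B) (snd i))) (\<lambda>(i,t). ?\<Psi> (snd i, t))"
    by (rule z2_sum_Sigma_outer) (use f2 assms(1-5) in auto)
  also have "\<dots> = z2_sum (Sigma F1 \<Gamma> \<times> (S2 \<times> B)) (\<lambda>((s,f'),(h,b)). \<Psi> f' h b)"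
    by (rule z2_sum_cong) auto
  finally show ?thesis .
qed

lemma singular_face_gauss_shuffle_flip_corner:
  assumes "1 \<le> n" "k \<le> n"
  shows "singular_face n k (gauss_shuffle n f h (flip_corner k a)) = singular_face n k (gauss_shuffle n f h a)"
proof -
  have "flip_corner k a (skip k i) = a (skip k i)" for i
    by (simp add: flip_corner_def skip_def)
  then have "first_vertices (flip_corner k a) \<circ> skip k = first_vertices a \<circ> skip k"
    "second_vertices (flip_corner k a) \<circ> skip k = second_vertices a \<circ> skip k"
    by (simp_all add: first_vertices_def second_vertices_def fun_eq_iff)
  then show ?thesis
    unfolding gauss_shuffle_def singular_face_gauss_simplex[OF assms] by simp
qed

lemma z2_sum_corner_faces:
  assumes "finite G" "ps + qs = Suc m"
  shows "z2_sum (G \<times> {(a,k). a \<in> shuffle_paths ps qs \<and> k \<le> Suc m \<and> \<not> horizontal_vertex (Suc m) a k \<and> \<not> vertical_vertex (Suc m) a k})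
     (\<lambda>((f,h),(a,k)). singular_face (Suc m) k (gauss_shuffle (Suc m) f h a)) = {}"
proof -
  let ?PC = "{(a,k). a \<in> shuffle_paths ps qs \<and> k \<le> Suc m \<and> \<not> horizontal_vertex (Suc m) a k \<and> \<not> vertical_vertex (Suc m) a k}"
  let ?\<iota> = "\<lambda>((f,h),(a,k)). ((f,h),(flip_corner k a, k))"
  have n: "ps + qs \<ge> 1" using assms by simp
  have "?PC \<subseteq> shuffle_paths ps qs \<times> {..Suc m}" by auto
  then have "finite ?PC" by (rule finite_subset) (simp add: finite_shuffle_paths)
  then show ?thesis
  proof (intro z2_sum_involution[where \<iota>="?\<iota>"])
    fix x assume x: "x \<in> G \<times> ?PC"
    then obtain f h a k where x_eq: "x = ((f,h),(a,k))" and a: "a \<in> shuffle_paths ps qs" and k: "k \<le> ps+qs"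
      and nA: "\<not> horizontal_vertex (ps+qs) a k" and nB: "\<not> vertical_vertex (ps+qs) a k" and g: "(f,h) \<in> G"
      using assms(2) by auto
    note F = flip_corner_props[OF a n k nA nB]
    show "?\<iota> x \<in> G \<times> ?PC" using F x_eq g k assms(2) by auto
    show "?\<iota> (?\<iota> x) = x" "?\<iota> x \<noteq> x" using F x_eq by auto
    show "(\<lambda>((f,h),(a,k)). singular_face (Suc m) k (gauss_shuffle (Suc m) f h a)) (?\<iota> x) =
          (\<lambda>((f,h),(a,k)). singular_face (Suc m) k (gauss_shuffle (Suc m) f h a)) x"
      using singular_face_gauss_shuffle_flip_corner[of "Suc m" k] k assms(2) x_eq by simp
  qed (use assms(1) in simp)
qed

lemma z2_sum_cell_chains:
  fixes F :: "('v set \<times> 'v set) set" and \<gamma> :: "nat \<Rightarrow> 'v set set \<Rightarrow> ((nat \<Rightarrow> real) \<Rightarrow> 'a::real_normed_vector) set"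
  assumes "finite F" "\<And>d. finite (cell_terms K \<gamma> d)"
  shows "z2_sum (Sigma F (cell_chain K \<gamma>)) snd
       = z2_sum (Sigma F (cell_terms K \<gamma>)) (\<lambda>(d,(f,h,a)). gauss_shuffle (card (fst d) - 1 + (card (snd d) - 1)) f h a)"
proof -
  define \<psi> where "\<psi> = (\<lambda>(d::'v set \<times> 'v set) (f::(nat \<Rightarrow> real) \<Rightarrow> 'a,h,a). gauss_shuffle (card (fst d) - 1 + (card (snd d) - 1)) f h a)"
  have "z2_sum (Sigma F (\<lambda>d. z2_sum (cell_terms K \<gamma> d) (\<psi> d))) snd = z2_sum (Sigma F (cell_terms K \<gamma>)) (\<lambda>(d,j). \<psi> d j)"
    by (rule z2_sum_Sigma_inner) (use assms in auto)
  moreover have "(\<lambda>d. z2_sum (cell_terms K \<gamma> d) (\<psi> d)) = cell_chain K \<gamma>" by (simp add: cell_chain_def \<psi>_def fun_eq_iff)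
  moreover have "(\<lambda>(d,j). \<psi> d j) = (\<lambda>(d,(f,h,a)). gauss_shuffle (card (fst d) - 1 + (card (snd d) - 1)) f h a)"
    by (simp add: \<psi>_def fun_eq_iff)
  ultimately show ?thesis by simp
qed

lemma z2_sum_horizontal_faces_reindex:
  fixes S T :: "((nat \<Rightarrow> real) \<Rightarrow> 'a::real_normed_vector) set"
  assumes ps: "1 \<le> ps" and n: "ps + qs = Suc m"
  shows "z2_sum ((S \<times> T) \<times> {(a,k). a \<in> shuffle_paths ps qs \<and> horizontal_vertex (Suc m) a k})
           (\<lambda>((f,h),(a,k)). singular_face (Suc m) k (gauss_shuffle (Suc m) f h a))
       = z2_sum ((S \<times> {..ps}) \<times> (T \<times> shuffle_paths (ps - 1) qs))
           (\<lambda>((f,j),(h,b)). gauss_shuffle m (singular_face ps j f) h b)"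
proof -
  let ?PA = "{(a,k). a \<in> shuffle_paths ps qs \<and> horizontal_vertex (Suc m) a k}"
  let ?JA = "{(j,b). j \<le> ps \<and> b \<in> shuffle_paths (ps - 1) qs}"
  let ?D = "\<lambda>(g,x). (g, (\<lambda>(a,k). (a k, delete_vertex (ps+qs) k a)) x)"
  let ?VA = "\<lambda>((f,h),(j,b)). gauss_shuffle m (singular_face ps j f) h b"
  have b1: "bij_betw ?D ((S \<times> T) \<times> ?PA) ((S \<times> T) \<times> ?JA)"
    by (rule bij_betw_map_snd) (use bij_betw_delete_horizontal[OF ps, of qs] n in simp)
  have b2: "bij_betw (\<lambda>((f,j),(h,b)). ((f,h),(j,b))) ((S \<times> {..ps}) \<times> (T \<times> shuffle_paths (ps - 1) qs)) ((S \<times> T) \<times> ?JA)"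
    by (rule bij_betw_byWitness[where f'="\<lambda>((f,h),(j,b)). ((f,j),(h,b))"]) auto
  have "z2_sum ((S \<times> T) \<times> ?PA) (\<lambda>((f,h),(a,k)). singular_face (Suc m) k (gauss_shuffle (Suc m) f h a))
      = z2_sum ((S \<times> T) \<times> ?PA) (?VA \<circ> ?D)"
  proof (rule z2_sum_cong[OF refl])
    fix x assume "x \<in> (S \<times> T) \<times> ?PA"
    then obtain f h a k where x: "x = ((f,h),(a,k))" and a: "a \<in> shuffle_paths ps qs"
      and k: "horizontal_vertex (ps+qs) a k"
      using n by auto
    show "(\<lambda>((f,h),(a,k)). singular_face (Suc m) k (gauss_shuffle (Suc m) f h a)) x = (?VA \<circ> ?D) x"
      using singular_face_gauss_shuffle_horizontal[OF a k ps, of f h] x n by simp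
  qed
  also have "\<dots> = z2_sum ((S \<times> T) \<times> ?JA) ?VA"
    by (rule z2_sum_reindex_bij_betw[OF b1, symmetric])
  also have "\<dots> = z2_sum ((S \<times> {..ps}) \<times> (T \<times> shuffle_paths (ps - 1) qs))
      (\<lambda>((f,j),(h,b)). gauss_shuffle m (singular_face ps j f) h b)"
    by (subst z2_sum_reindex_bij_betw[OF b2]) (rule z2_sum_cong, auto)
  finally show ?thesis .
qed

lemma z2_sum_first_facet_cells:
  assumes fsc: "finite_simplicial_complex K" and hae: "hom_almost_embedding K \<gamma>"
    and \<sigma>: "\<sigma> \<in> K" and cs: "card \<sigma> = Suc ps" "card \<tau> = Suc qs" and ps: "1 \<le> ps"
    and n: "ps + qs = Suc m"
  shows "z2_sum ((simplex_chain K \<gamma> \<sigma> \<times> {..ps}) \<times> (simplex_chain K \<gamma> \<tau> \<times> shuffle_paths (ps - 1) qs))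
           (\<lambda>((f,j),(h,b)). gauss_shuffle m (singular_face ps j f) h b)
       = z2_sum (Sigma ((\<lambda>s. (s,\<tau>)) ` facets K \<sigma>) (cell_chain K \<gamma>)) snd"
proof -
  let ?Fa = "(\<lambda>s. (s,\<tau>)) ` facets K \<sigma>"
  let ?R = "Sigma (facets K \<sigma>) (simplex_chain K \<gamma>) \<times> (simplex_chain K \<gamma> \<tau> \<times> shuffle_paths (ps - 1) qs)"
  have fG: "finite (simplex_chain K \<gamma> \<rho>)" for \<rho> by (rule finite_simplex_chain[OF fsc hae])
  have b: "bij_betw (\<lambda>((s,f),(h,b)). ((s,\<tau>),(f,h,b))) ?R (Sigma ?Fa (cell_terms K \<gamma>))"
    by (rule bij_betw_byWitness[where f'="\<lambda>((s,t),(f,h,b)). ((s,f),(h,b))"])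
      (use facetsD[OF fsc _ cs(1)] cs(2) in \<open>auto simp: cell_terms_def\<close>)
  have "z2_sum ((simplex_chain K \<gamma> \<sigma> \<times> {..ps}) \<times> (simplex_chain K \<gamma> \<tau> \<times> shuffle_paths (ps - 1) qs))
           (\<lambda>((f,j),(h,b)). gauss_shuffle m (singular_face ps j f) h b)
      = z2_sum ?R (\<lambda>((s,f),(h,b)). gauss_shuffle m f h b)"
    by (rule z2_sum_substitute_boundary[OF fG fG finite_shuffle_paths finite_facets[OF fsc \<sigma>] fG
          boundary_simplex_chain[OF fsc hae \<sigma> cs(1) ps]])
  also have "\<dots> = z2_sum (Sigma ?Fa (cell_terms K \<gamma>)) (\<lambda>(d,(f,h,a)). gauss_shuffle (card (fst d) - 1 + (card (snd d) - 1)) f h a)"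
  proof (subst z2_sum_reindex_bij_betw[OF b], rule z2_sum_cong[OF refl])
    fix x assume "x \<in> ?R"
    then obtain s f h b where x: "x = ((s,f),(h,b))" and s: "s \<in> facets K \<sigma>" by auto
    have "card s - 1 + (card \<tau> - 1) = m" using facetsD[OF fsc s cs(1)] cs(2) n by simp
    then show "(\<lambda>((s,f),(h,b)). gauss_shuffle m f h b) x
        = ((\<lambda>(d,(f,h,a)). gauss_shuffle (card (fst d) - 1 + (card (snd d) - 1)) f h a) \<circ> (\<lambda>((s,f),(h,b)). ((s,\<tau>),(f,h,b)))) x"
      using x by simp
  qed
  also have "\<dots> = z2_sum (Sigma ?Fa (cell_chain K \<gamma>)) snd"
    by (rule z2_sum_cell_chains[symmetric]) (use finite_facets[OF fsc \<sigma>] finite_cell_terms[OF fsc hae] in auto)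
  finally show ?thesis .
qed

lemma z2_sum_horizontal_faces:
  assumes fsc: "finite_simplicial_complex K" and hae: "hom_almost_embedding K \<gamma>"
    and K: "\<sigma> \<in> K" "\<tau> \<in> K" and cs: "card \<sigma> = Suc ps" "card \<tau> = Suc qs" and n: "ps + qs = Suc m"
  shows "z2_sum ((simplex_chain K \<gamma> \<sigma> \<times> simplex_chain K \<gamma> \<tau>) \<times> {(a,k). a \<in> shuffle_paths ps qs \<and> horizontal_vertex (Suc m) a k})
     (\<lambda>((f,h),(a,k)). singular_face (Suc m) k (gauss_shuffle (Suc m) f h a))
   = z2_sum (Sigma ((\<lambda>s. (s,\<tau>)) ` facets K \<sigma>) (cell_chain K \<gamma>)) snd"
proof (cases "ps = 0")
  case True
  have no_paths: "{(a,k). a \<in> shuffle_paths ps qs \<and> horizontal_vertex (Suc m) a k} = {}"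
    using horizontal_vertex_first_pos[of _ ps qs] n True by fastforce
  have no_facets: "facets K \<sigma> = {}" using facetsD[OF fsc _ cs(1)] True by fastforce
  show ?thesis unfolding no_paths no_facets by simp
next
  case False
  then have ps: "1 \<le> ps" by simp
  show ?thesis
    unfolding z2_sum_horizontal_faces_reindex[OF ps n]
    by (rule z2_sum_first_facet_cells[OF fsc hae K(1) cs ps n])
qed

lemma z2_sum_vertical_faces_reindex:
  fixes S T :: "((nat \<Rightarrow> real) \<Rightarrow> 'a::real_normed_vector) set"
  assumes qs: "1 \<le> qs" and n: "ps + qs = Suc m"
  shows "z2_sum ((S \<times> T) \<times> {(a,k). a \<in> shuffle_paths ps qs \<and> vertical_vertex (Suc m) a k})
           (\<lambda>((f,h),(a,k)). singular_face (Suc m) k (gauss_shuffle (Suc m) f h a))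
       = z2_sum ((T \<times> {..qs}) \<times> (S \<times> shuffle_paths ps (qs - 1)))
           (\<lambda>((h,j),(f,c)). gauss_shuffle m f (singular_face qs j h) c)"
proof -
  let ?n = "ps + qs"
  let ?PB = "{(a,k). a \<in> shuffle_paths ps qs \<and> vertical_vertex (Suc m) a k}"
  let ?JB = "{(j,c). j \<le> qs \<and> c \<in> shuffle_paths ps (qs - 1)}"
  let ?D = "\<lambda>(g,x). (g, (\<lambda>(a,k). (transpose_path ?n a k,
              transpose_path (?n - 1) (delete_vertex ?n k (transpose_path ?n a)))) x)"
  let ?VB = "\<lambda>((f,h),(j,c)). gauss_shuffle m f (singular_face qs j h) c"
  have b1: "bij_betw ?D ((S \<times> T) \<times> ?PB) ((S \<times> T) \<times> ?JB)"
    by (rule bij_betw_map_snd) (use bij_betw_delete_vertical[OF qs, of ps] n in simp)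
  have b2: "bij_betw (\<lambda>((h,j),(f,c)). ((f,h),(j,c))) ((T \<times> {..qs}) \<times> (S \<times> shuffle_paths ps (qs - 1))) ((S \<times> T) \<times> ?JB)"
    by (rule bij_betw_byWitness[where f'="\<lambda>((f,h),(j,c)). ((h,j),(f,c))"]) auto
  have "z2_sum ((S \<times> T) \<times> ?PB) (\<lambda>((f,h),(a,k)). singular_face (Suc m) k (gauss_shuffle (Suc m) f h a))
      = z2_sum ((S \<times> T) \<times> ?PB) (?VB \<circ> ?D)"
  proof (rule z2_sum_cong[OF refl])
    fix x assume "x \<in> (S \<times> T) \<times> ?PB"
    then obtain f h a k where x: "x = ((f,h),(a,k))" and a: "a \<in> shuffle_paths ps qs"
      and k: "vertical_vertex (ps+qs) a k"
      using n by auto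
    show "(\<lambda>((f,h),(a,k)). singular_face (Suc m) k (gauss_shuffle (Suc m) f h a)) x = (?VB \<circ> ?D) x"
      using singular_face_gauss_shuffle_vertical[OF a k qs, of f h] x n by simp
  qed
  also have "\<dots> = z2_sum ((S \<times> T) \<times> ?JB) ?VB"
    by (rule z2_sum_reindex_bij_betw[OF b1, symmetric])
  also have "\<dots> = z2_sum ((T \<times> {..qs}) \<times> (S \<times> shuffle_paths ps (qs - 1)))
      (\<lambda>((h,j),(f,c)). gauss_shuffle m f (singular_face qs j h) c)"
    by (subst z2_sum_reindex_bij_betw[OF b2]) (rule z2_sum_cong, auto)
  finally show ?thesis .
qed

lemma z2_sum_second_facet_cells:
  assumes fsc: "finite_simplicial_complex K" and hae: "hom_almost_embedding K \<gamma>"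
    and \<tau>: "\<tau> \<in> K" and cs: "card \<sigma> = Suc ps" "card \<tau> = Suc qs" and qs: "1 \<le> qs"
    and n: "ps + qs = Suc m"
  shows "z2_sum ((simplex_chain K \<gamma> \<tau> \<times> {..qs}) \<times> (simplex_chain K \<gamma> \<sigma> \<times> shuffle_paths ps (qs - 1)))
           (\<lambda>((h,j),(f,c)). gauss_shuffle m f (singular_face qs j h) c)
       = z2_sum (Sigma ((\<lambda>s. (\<sigma>,s)) ` facets K \<tau>) (cell_chain K \<gamma>)) snd"
proof -
  let ?Fb = "(\<lambda>s. (\<sigma>,s)) ` facets K \<tau>"
  let ?R = "Sigma (facets K \<tau>) (simplex_chain K \<gamma>) \<times> (simplex_chain K \<gamma> \<sigma> \<times> shuffle_paths ps (qs - 1))"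
  have fG: "finite (simplex_chain K \<gamma> \<rho>)" for \<rho> by (rule finite_simplex_chain[OF fsc hae])
  have b: "bij_betw (\<lambda>((s,h),(f,c)). ((\<sigma>,s),(f,h,c))) ?R (Sigma ?Fb (cell_terms K \<gamma>))"
    by (rule bij_betw_byWitness[where f'="\<lambda>((t,s),(f,h,c)). ((s,h),(f,c))"])
      (use facetsD[OF fsc _ cs(2)] cs(1) in \<open>auto simp: cell_terms_def\<close>)
  have "z2_sum ((simplex_chain K \<gamma> \<tau> \<times> {..qs}) \<times> (simplex_chain K \<gamma> \<sigma> \<times> shuffle_paths ps (qs - 1)))
           (\<lambda>((h,j),(f,c)). gauss_shuffle m f (singular_face qs j h) c)
      = z2_sum ?R (\<lambda>((s,h),(f,c)). gauss_shuffle m f h c)"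
    by (rule z2_sum_substitute_boundary[OF fG fG finite_shuffle_paths finite_facets[OF fsc \<tau>] fG
          boundary_simplex_chain[OF fsc hae \<tau> cs(2) qs]])
  also have "\<dots> = z2_sum (Sigma ?Fb (cell_terms K \<gamma>)) (\<lambda>(d,(f,h,a)). gauss_shuffle (card (fst d) - 1 + (card (snd d) - 1)) f h a)"
  proof (subst z2_sum_reindex_bij_betw[OF b], rule z2_sum_cong[OF refl])
    fix x assume "x \<in> ?R"
    then obtain s h f c where x: "x = ((s,h),(f,c))" and s: "s \<in> facets K \<tau>" by auto
    have "card \<sigma> - 1 + (card s - 1) = m" using facetsD[OF fsc s cs(2)] cs(1) n by simp
    then show "(\<lambda>((s,h),(f,c)). gauss_shuffle m f h c) x
        = ((\<lambda>(d,(f,h,a)). gauss_shuffle (card (fst d) - 1 + (card (snd d) - 1)) f h a) \<circ> (\<lambda>((s,h),(f,c)). ((\<sigma>,s),(f,h,c)))) x"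
      using x by simp
  qed
  also have "\<dots> = z2_sum (Sigma ?Fb (cell_chain K \<gamma>)) snd"
    by (rule z2_sum_cell_chains[symmetric]) (use finite_facets[OF fsc \<tau>] finite_cell_terms[OF fsc hae] in auto)
  finally show ?thesis .
qed

lemma z2_sum_vertical_faces:
  assumes fsc: "finite_simplicial_complex K" and hae: "hom_almost_embedding K \<gamma>"
    and K: "\<sigma> \<in> K" "\<tau> \<in> K" and cs: "card \<sigma> = Suc ps" "card \<tau> = Suc qs" and n: "ps + qs = Suc m"
  shows "z2_sum ((simplex_chain K \<gamma> \<sigma> \<times> simplex_chain K \<gamma> \<tau>) \<times> {(a,k). a \<in> shuffle_paths ps qs \<and> vertical_vertex (Suc m) a k})
     (\<lambda>((f,h),(a,k)). singular_face (Suc m) k (gauss_shuffle (Suc m) f h a))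
   = z2_sum (Sigma ((\<lambda>s. (\<sigma>,s)) ` facets K \<tau>) (cell_chain K \<gamma>)) snd"
proof (cases "qs = 0")
  case True
  have "\<not> vertical_vertex (Suc m) a k" if a: "a \<in> shuffle_paths ps qs" for a k
  proof
    assume "vertical_vertex (Suc m) a k"
    then have "horizontal_vertex (qs+ps) (transpose_path (ps+qs) a) k"
      using horizontal_transpose_iff_vertical[OF a] n by (simp add: add.commute)
    then show False
      using horizontal_vertex_first_pos[OF transpose_path_in_shuffle_paths[OF a]] n True by (simp add: add.commute)
  qed
  then have no_paths: "{(a,k). a \<in> shuffle_paths ps qs \<and> vertical_vertex (Suc m) a k} = {}" by auto
  have no_facets: "facets K \<tau> = {}" using facetsD[OF fsc _ cs(2)] True by fastforce
  show ?thesis unfolding no_paths no_facets by simp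
next
  case False
  then have qs: "1 \<le> qs" by simp
  show ?thesis
    unfolding z2_sum_vertical_faces_reindex[OF qs n]
    by (rule z2_sum_second_facet_cells[OF fsc hae K(2) cs qs n])
qed

lemma z2_sum_faces_split:
  assumes "finite G" "ps + qs = Suc m"
  shows "z2_sum (G \<times> {(a,k). a \<in> shuffle_paths ps qs \<and> k \<le> Suc m})
           (\<lambda>((f,h),(a,k)). singular_face (Suc m) k (gauss_shuffle (Suc m) f h a))
       = symd (z2_sum (G \<times> {(a,k). a \<in> shuffle_paths ps qs \<and> horizontal_vertex (Suc m) a k})
                (\<lambda>((f,h),(a,k)). singular_face (Suc m) k (gauss_shuffle (Suc m) f h a)))
              (z2_sum (G \<times> {(a,k). a \<in> shuffle_paths ps qs \<and> vertical_vertex (Suc m) a k})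
                (\<lambda>((f,h),(a,k)). singular_face (Suc m) k (gauss_shuffle (Suc m) f h a)))"
    (is "z2_sum (G \<times> ?Pk) ?V = symd (z2_sum (G \<times> ?PA) ?V) (z2_sum (G \<times> ?PB) ?V)")
proof -
  let ?PC = "{(a,k). a \<in> shuffle_paths ps qs \<and> k \<le> Suc m \<and> \<not> horizontal_vertex (Suc m) a k \<and> \<not> vertical_vertex (Suc m) a k}"
  have fP: "finite ?Pk" using finite_shuffle_path_pairs[of ps qs "\<lambda>_ _. True" "Suc m"] by simp
  have sub: "?PA \<subseteq> ?Pk" "?PB \<subseteq> ?Pk" "?PC \<subseteq> ?Pk" by (auto simp: horizontal_vertex_def vertical_vertex_def)
  have fin: "finite (G \<times> ?PA)" "finite (G \<times> ?PB)" "finite (G \<times> ?PC)"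
    using assms(1) finite_subset[OF sub(1) fP] finite_subset[OF sub(2) fP] finite_subset[OF sub(3) fP] by auto
  have split: "G \<times> ?Pk = (G \<times> ?PA) \<union> ((G \<times> ?PB) \<union> (G \<times> ?PC))"
    by (auto simp: horizontal_vertex_def vertical_vertex_def)
  have disj: "(G \<times> ?PA) \<inter> ((G \<times> ?PB) \<union> (G \<times> ?PC)) = {}" "(G \<times> ?PB) \<inter> (G \<times> ?PC) = {}"
    using not_horizontal_and_vertical[of _ ps qs] assms(2) by auto
  have "z2_sum (G \<times> ?Pk) ?V = symd (z2_sum (G \<times> ?PA) ?V) (z2_sum ((G \<times> ?PB) \<union> (G \<times> ?PC)) ?V)"
    unfolding split by (rule z2_sum_Un_disjoint[OF fin(1) finite_UnI[OF fin(2,3)] disj(1)])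
  also have "z2_sum ((G \<times> ?PB) \<union> (G \<times> ?PC)) ?V = symd (z2_sum (G \<times> ?PB) ?V) (z2_sum (G \<times> ?PC) ?V)"
    by (rule z2_sum_Un_disjoint[OF fin(2,3) disj(2)])
  also have "z2_sum (G \<times> ?PC) ?V = {}"
    by (rule z2_sum_corner_faces[OF assms])
  finally show ?thesis by (simp add: symd_def)
qed

lemma sbd_cell_chain_as_faces:
  assumes fsc: "finite_simplicial_complex K" and hae: "hom_almost_embedding K \<gamma>"
    and cs: "card \<sigma> = Suc ps" "card \<tau> = Suc qs" and n: "ps + qs = Suc m"
  shows "sbd (Suc m) (cell_chain K \<gamma> (\<sigma>,\<tau>))
       = z2_sum ((simplex_chain K \<gamma> \<sigma> \<times> simplex_chain K \<gamma> \<tau>) \<times> {(a,k). a \<in> shuffle_paths ps qs \<and> k \<le> Suc m})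
           (\<lambda>((f,h),(a,k)). singular_face (Suc m) k (gauss_shuffle (Suc m) f h a))"
proof -
  let ?I = "cell_terms K \<gamma> (\<sigma>,\<tau>)"
  let ?\<phi> = "\<lambda>(f,h,a). gauss_shuffle (Suc m) f h a"
  have fI: "finite ?I" by (rule finite_cell_terms[OF fsc hae])
  have b: "bij_betw (\<lambda>((f,h),(a,k)). ((f,h,a),k))
      ((simplex_chain K \<gamma> \<sigma> \<times> simplex_chain K \<gamma> \<tau>) \<times> {(a,k). a \<in> shuffle_paths ps qs \<and> k \<le> Suc m})
      (Sigma ?I (\<lambda>_. {..Suc m}))"
    by (rule bij_betw_byWitness[where f'="\<lambda>((f,h,a),k). ((f,h),(a,k))"]) (auto simp: cell_terms_def cs)
  have chain: "cell_chain K \<gamma> (\<sigma>,\<tau>) = z2_sum ?I ?\<phi>" using cs n by (simp add: cell_chain_def)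
  have "sbd (Suc m) (cell_chain K \<gamma> (\<sigma>,\<tau>))
      = z2_sum (cell_chain K \<gamma> (\<sigma>,\<tau>) \<times> {..Suc m}) (\<lambda>(f,k). singular_face (Suc m) k f)"
    by (rule sbd_as_z2_sum[OF finite_cell_chain[OF fsc hae]]) simp
  also have "\<dots> = z2_sum (z2_sum ?I ?\<phi> \<times> {..Suc m}) (\<lambda>(f,k). singular_face (Suc m) k f)"
    unfolding chain ..
  also have "\<dots> = z2_sum (Sigma ?I (\<lambda>_. {..Suc m})) (\<lambda>(i,k). singular_face (Suc m) k (?\<phi> i))"
    by (subst z2_sum_Sigma_outer[OF fI]) (auto intro!: z2_sum_cong)
  also have "\<dots> = z2_sum ((simplex_chain K \<gamma> \<sigma> \<times> simplex_chain K \<gamma> \<tau>) \<times> {(a,k). a \<in> shuffle_paths ps qs \<and> k \<le> Suc m})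
           (\<lambda>((f,h),(a,k)). singular_face (Suc m) k (gauss_shuffle (Suc m) f h a))"
    by (subst z2_sum_reindex_bij_betw[OF b]) (auto intro!: z2_sum_cong)
  finally show ?thesis .
qed

lemma dfacet_eq_facets:
  "{d. dfacet K d (\<sigma>,\<tau>)} = (\<lambda>s. (s,\<tau>)) ` facets K \<sigma> \<union> (\<lambda>s. (\<sigma>,s)) ` facets K \<tau>"
  by (auto simp: dfacet_def facets_def image_iff)

lemma z2_sum_dfacets:
  assumes fsc: "finite_simplicial_complex K" and K: "\<sigma> \<in> K" "\<tau> \<in> K" and fC: "\<And>d. finite (C d)"
  shows "z2_sum (Sigma {d. dfacet K d (\<sigma>,\<tau>)} C) snd
       = symd (z2_sum (Sigma ((\<lambda>s. (s,\<tau>)) ` facets K \<sigma>) C) snd) (z2_sum (Sigma ((\<lambda>s. (\<sigma>,s)) ` facets K \<tau>) C) snd)"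
proof -
  have "\<sigma> \<notin> facets K \<sigma>" by (simp add: facets_def)
  then have "Sigma ((\<lambda>s. (s,\<tau>)) ` facets K \<sigma>) C \<inter> Sigma ((\<lambda>s. (\<sigma>,s)) ` facets K \<tau>) C = {}" by auto
  moreover have "finite (Sigma ((\<lambda>s. (s,\<tau>)) ` facets K \<sigma>) C)" "finite (Sigma ((\<lambda>s. (\<sigma>,s)) ` facets K \<tau>) C)"
    using finite_facets[OF fsc K(1)] finite_facets[OF fsc K(2)] fC by auto
  ultimately show ?thesis
    unfolding dfacet_eq_facets Sigma_Un_distrib1 by (rule z2_sum_Un_disjoint[rotated 2])
qed

lemma sbd_cell_chain:
  assumes fsc: "finite_simplicial_complex K" and hae: "hom_almost_embedding K \<gamma>"
    and c: "c \<in> dcells K (Suc m)"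
  shows "sbd (Suc m) (cell_chain K \<gamma> c) = z2_sum (Sigma {d. dfacet K d c} (cell_chain K \<gamma>)) snd"
proof -
  obtain \<sigma> \<tau> where c_eq: "c = (\<sigma>,\<tau>)" and K: "\<sigma> \<in> K" "\<tau> \<in> K"
    and cc: "card \<sigma> + card \<tau> = Suc m + 2"
    using c by (auto simp: dcells_def)
  define ps where "ps = card \<sigma> - 1"
  define qs where "qs = card \<tau> - 1"
  have cs: "card \<sigma> = Suc ps" "card \<tau> = Suc qs"
    using simplicial_complexD(3)[OF fsc K(1)] simplicial_complexD(3)[OF fsc K(2)] ps_def qs_def by auto
  have n: "ps + qs = Suc m" using cs cc by simp
  have fG: "finite (simplex_chain K \<gamma> \<sigma> \<times> simplex_chain K \<gamma> \<tau>)" using finite_simplex_chain[OF fsc hae] by simp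
  show ?thesis
    unfolding c_eq sbd_cell_chain_as_faces[OF fsc hae cs n] z2_sum_faces_split[OF fG n]
      z2_sum_horizontal_faces[OF fsc hae K cs n] z2_sum_vertical_faces[OF fsc hae K cs n]
    by (rule z2_sum_dfacets[OF fsc K finite_cell_chain[OF fsc hae], symmetric])
qed

definition gauss_chain_map :: "'v set set \<Rightarrow> (nat \<Rightarrow> 'v set set \<Rightarrow> ((nat \<Rightarrow> real) \<Rightarrow> 'a::real_normed_vector) set) \<Rightarrow> nat
   \<Rightarrow> ('v set \<times> 'v set) set \<Rightarrow> ((nat \<Rightarrow> real) \<Rightarrow> 'a) set" where
  "gauss_chain_map K \<gamma> p A = z2_sum (Sigma A (cell_chain K \<gamma>)) snd"

lemma finite_dcells:
  assumes "finite_simplicial_complex K"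
  shows "finite (dcells K p)"
proof -
  have "dcells K p \<subseteq> K \<times> K" by (auto simp: dcells_def)
  moreover have "finite K" using assms by (simp add: finite_simplicial_complex_def)
  ultimately show ?thesis by (meson finite_SigmaI finite_subset)
qed

lemma gauss_chain_map_symd:
  assumes fsc: "finite_simplicial_complex K" and hae: "hom_almost_embedding K \<gamma>"
    and "A \<subseteq> dcells K p" "B \<subseteq> dcells K p"
  shows "gauss_chain_map K \<gamma> p (symd A B) = symd (gauss_chain_map K \<gamma> p A) (gauss_chain_map K \<gamma> p B)"
proof -
  have "finite A" "finite B" using assms(3,4) finite_dcells[OF fsc, of p] by (meson finite_subset)+
  then show ?thesis unfolding gauss_chain_map_def by (rule z2_sum_Sigma_symd[OF _ _ finite_cell_chain[OF fsc hae]])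
qed

lemma dcellsD:
  assumes fsc: "finite_simplicial_complex K" and c: "c \<in> dcells K p"
  shows "card (fst c) - 1 + (card (snd c) - 1) = p" "fst c \<in> K" "snd c \<in> K" "fst c \<inter> snd c = {}"
proof -
  obtain \<sigma> \<tau> where ce: "c = (\<sigma>,\<tau>)" and K: "\<sigma> \<in> K" "\<tau> \<in> K" "\<sigma> \<inter> \<tau> = {}" and cc: "card \<sigma> + card \<tau> = p + 2"
    using c by (auto simp: dcells_def)
  have "card \<sigma> \<ge> 1" "card \<tau> \<ge> 1" using simplicial_complexD(3)[OF fsc K(1)] simplicial_complexD(3)[OF fsc K(2)] by auto
  then show "card (fst c) - 1 + (card (snd c) - 1) = p" using ce cc by simp
  show "fst c \<in> K" "snd c \<in> K" "fst c \<inter> snd c = {}" using ce K by auto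
qed

lemma cell_chain_singular:
  assumes fsc: "finite_simplicial_complex K" and hae: "hom_almost_embedding K \<gamma>"
    and c: "c \<in> dcells K p" and z: "z \<in> cell_chain K \<gamma> c"
  shows "singular_simplex p (top_of_set (sphere 0 1)) z"
proof -
  note D = dcellsD[OF fsc c]
  have "z \<in> z2_sum (cell_terms K \<gamma> c) (\<lambda>(f,h,a). gauss_shuffle (card (fst c) - 1 + (card (snd c) - 1)) f h a)"
    using z by (simp add: cell_chain_def)
  then have "z \<in> (\<lambda>(f,h,a). gauss_shuffle (card (fst c) - 1 + (card (snd c) - 1)) f h a) ` cell_terms K \<gamma> c"
    by (rule subsetD[OF z2_sum_subset_image])
  then obtain f h a where zf: "z = gauss_shuffle p f h a" and f: "f \<in> simplex_chain K \<gamma> (fst c)" and h: "h \<in> simplex_chain K \<gamma> (snd c)"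
    and a: "a \<in> shuffle_paths (card (fst c) - 1) (card (snd c) - 1)"
    using D(1) by (auto simp: cell_terms_def)
  have "singular_simplex (card (fst c) - 1 + (card (snd c) - 1)) (top_of_set (sphere 0 1)) (gauss_shuffle (card (fst c) - 1 + (card (snd c) - 1)) f h a)"
  proof (rule singular_simplex_gauss_shuffle[OF a])
    show "singular_simplex (card (fst c) - 1) euclidean f" by (rule simplex_chainD(1)[OF fsc hae f])
    show "singular_simplex (card (snd c) - 1) euclidean h" by (rule simplex_chainD(1)[OF fsc hae h])
    show "f y \<noteq> h w" if "y \<in> standard_simplex (card (fst c) - 1)" "w \<in> standard_simplex (card (snd c) - 1)" for y w
      by (rule simplex_chain_disjoint[OF hae D(4) f h that])
  qed
  then show ?thesis using zf D(1) by simp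
qed

lemma gauss_chain_map_zchain:
  assumes fsc: "finite_simplicial_complex K" and hae: "hom_almost_embedding K \<gamma>"
    and A: "A \<subseteq> dcells K p"
  shows "zchain p (top_of_set (sphere 0 1)) (gauss_chain_map K \<gamma> p A)"
proof -
  have fA: "finite A" using A finite_dcells[OF fsc, of p] by (rule finite_subset)
  have fS: "finite (Sigma A (cell_chain K \<gamma>))" using fA finite_cell_chain[OF fsc hae] by auto
  have "singular_simplex p (top_of_set (sphere 0 1)) z" if "z \<in> gauss_chain_map K \<gamma> p A" for z
  proof -
    have "z \<in> z2_sum (Sigma A (cell_chain K \<gamma>)) snd" using that by (simp add: gauss_chain_map_def)
    then have "z \<in> snd ` Sigma A (cell_chain K \<gamma>)" by (rule subsetD[OF z2_sum_subset_image])
    then obtain c where "c \<in> A" "z \<in> cell_chain K \<gamma> c" by auto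
    then show ?thesis using cell_chain_singular[OF fsc hae] A by blast
  qed
  then show ?thesis unfolding zchain_def gauss_chain_map_def using finite_z2_sum[OF fS] by (simp add: gauss_chain_map_def)
qed

lemma gauss_chain_map_nontrivial:
  assumes fsc: "finite_simplicial_complex K" and hae: "hom_almost_embedding K \<gamma>"
    and c: "({v}, {w}) \<in> dcells K 0"
  shows "odd (card (gauss_chain_map K \<gamma> 0 {({v}, {w})}))"
proof -
  have K: "{v} \<in> K" "{w} \<in> K" using c by (auto simp: dcells_def)
  have "gauss_chain_map K \<gamma> 0 {({v}, {w})} = cell_chain K \<gamma> ({v}, {w})"
  proof -
    have "Sigma {({v}, {w})} (cell_chain K \<gamma>) = Sigma {({v}, {w})} (\<lambda>_. cell_chain K \<gamma> ({v}, {w}))" by auto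
    then show ?thesis unfolding gauss_chain_map_def using z2_sum_Sigma_singleton[OF finite_cell_chain[OF fsc hae]] by simp
  qed
  moreover have "odd (card (cell_chain K \<gamma> ({v}, {w})))"
    unfolding cell_chain_def
  proof (subst odd_card_z2_sum_iff[OF finite_cell_terms[OF fsc hae]])
    have "odd (card (\<gamma> 0 {{v}}))" "odd (card (\<gamma> 0 {{w}}))"
      using hae K unfolding hom_almost_embedding_def by auto
    moreover have "cell_terms K \<gamma> ({v}, {w}) = \<gamma> 0 {{v}} \<times> \<gamma> 0 {{w}} \<times> {\<lambda>_. 0}"
      using K by (simp add: cell_terms_def simplex_chain_def shuffle_paths_0_0)
    ultimately show "odd (card (cell_terms K \<gamma> ({v}, {w})))" by (simp add: card_cartesian_product)
  qed
  ultimately show ?thesis by simp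
qed

lemma finite_dfacets:
  assumes fsc: "finite_simplicial_complex K" and c: "c \<in> dcells K p"
  shows "finite {d. dfacet K d c}"
proof -
  obtain \<sigma> \<tau> where ce: "c = (\<sigma>,\<tau>)" and K: "\<sigma> \<in> K" "\<tau> \<in> K" using c by (auto simp: dcells_def)
  show ?thesis unfolding ce dfacet_eq_facets using finite_facets[OF fsc K(1)] finite_facets[OF fsc K(2)] by simp
qed

lemma dbd_as_z2_sum:
  assumes "finite A"
  shows "dbd K A = z2_sum (Sigma A (\<lambda>c. {d. dfacet K d c})) snd"
proof -
  have "card {x\<in>Sigma A (\<lambda>c. {d. dfacet K d c}). snd x = z} = card {d\<in>A. dfacet K z d}" for z
  proof -
    have "{x\<in>Sigma A (\<lambda>c. {d. dfacet K d c}). snd x = z} = (\<lambda>d. (d,z)) ` {d\<in>A. dfacet K z d}" by auto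
    moreover have "inj_on (\<lambda>d. (d,z)) {d\<in>A. dfacet K z d}" by (auto simp: inj_on_def)
    ultimately show ?thesis by (simp add: card_image)
  qed
  then show ?thesis by (simp add: dbd_def z2_sum_def)
qed

lemma sbd_gauss_chain_map:
  assumes fsc: "finite_simplicial_complex K" and hae: "hom_almost_embedding K \<gamma>"
    and A: "A \<subseteq> dcells K (Suc m)"
  shows "sbd (Suc m) (gauss_chain_map K \<gamma> (Suc m) A) = gauss_chain_map K \<gamma> m (dbd K A)"
proof -
  let ?C = "cell_chain K \<gamma>"
  have fA: "finite A" using A finite_dcells[OF fsc, of "Suc m"] by (rule finite_subset)
  have fC: "\<And>c. finite (?C c)" by (rule finite_cell_chain[OF fsc hae])
  have "sbd (Suc m) (gauss_chain_map K \<gamma> (Suc m) A) = z2_sum (Sigma A (\<lambda>c. sbd (Suc m) (?C c))) snd"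
    unfolding gauss_chain_map_def by (rule sbd_z2_sum_Sigma[OF fA fC])
  also have "\<dots> = z2_sum (Sigma A (\<lambda>c. z2_sum (Sigma {d. dfacet K d c} ?C) snd)) snd"
    using sbd_cell_chain[OF fsc hae] A by (auto intro!: arg_cong[where f="\<lambda>X. z2_sum X snd"])
  also have "\<dots> = z2_sum (Sigma (z2_sum (Sigma A (\<lambda>c. {d. dfacet K d c})) snd) ?C) snd"
    by (rule z2_sum_Sigma_Sigma[OF fA _ fC]) (use finite_dfacets[OF fsc] A in blast)
  also have "\<dots> = gauss_chain_map K \<gamma> m (dbd K A)"
    unfolding gauss_chain_map_def dbd_as_z2_sum[OF fA] ..
  finally show ?thesis .
qed

lemma cell_chain_extensional:
  assumes fsc: "finite_simplicial_complex K" and c: "c \<in> dcells K p" and z: "z \<in> cell_chain K \<gamma> c"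
  shows "z \<in> extensional (standard_simplex p)"
proof -
  have "z \<in> z2_sum (cell_terms K \<gamma> c) (\<lambda>(f,h,a). gauss_shuffle (card (fst c) - 1 + (card (snd c) - 1)) f h a)"
    using z by (simp add: cell_chain_def)
  then have "z \<in> (\<lambda>(f,h,a). gauss_shuffle (card (fst c) - 1 + (card (snd c) - 1)) f h a) ` cell_terms K \<gamma> c"
    by (rule subsetD[OF z2_sum_subset_image])
  then show ?thesis using dcellsD(1)[OF fsc c] by (auto simp: gauss_shuffle_def gauss_simplex_def)
qed

lemma cell_chain_swap:
  fixes \<gamma> :: "nat \<Rightarrow> 'v set set \<Rightarrow> ((nat \<Rightarrow> real) \<Rightarrow> 'a::real_normed_vector) set"
  assumes fsc: "finite_simplicial_complex K" and c: "(\<sigma>,\<tau>) \<in> dcells K p"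
  shows "cell_chain K \<gamma> (\<tau>,\<sigma>) = simplex_map p uminus ` cell_chain K \<gamma> (\<sigma>,\<tau>)"
proof -
  define ps where "ps = card \<sigma> - 1"
  define qs where "qs = card \<tau> - 1"
  have n: "ps + qs = p" using dcellsD(1)[OF fsc c] ps_def qs_def by simp
  let ?m = "simplex_map p (uminus :: 'a \<Rightarrow> 'a)"
  let ?I = "simplex_chain K \<gamma> \<sigma> \<times> simplex_chain K \<gamma> \<tau> \<times> shuffle_paths ps qs"
  let ?\<phi> = "\<lambda>(f,h,a). gauss_shuffle p f h a"
  let ?swap = "\<lambda>(f,h,a). (h, f, transpose_path p a)"
  have b: "bij_betw ?swap ?I (simplex_chain K \<gamma> \<tau> \<times> simplex_chain K \<gamma> \<sigma> \<times> shuffle_paths qs ps)"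
    by (rule bij_betw_byWitness[where f'="\<lambda>(h,f,a). (f, h, transpose_path p a)"])
      (use transpose_path_transpose_path[of _ ps qs] transpose_path_transpose_path[of _ qs ps]
           transpose_path_in_shuffle_paths[of _ ps qs] transpose_path_in_shuffle_paths[of _ qs ps] n
       in \<open>auto simp: add.commute\<close>)
  have "cell_chain K \<gamma> (\<tau>,\<sigma>) = z2_sum (simplex_chain K \<gamma> \<tau> \<times> simplex_chain K \<gamma> \<sigma> \<times> shuffle_paths qs ps) ?\<phi>"
    using n by (simp add: cell_chain_def cell_terms_def ps_def qs_def add.commute)
  also have "\<dots> = z2_sum ?I (?\<phi> \<circ> ?swap)"
    by (rule z2_sum_reindex_bij_betw[OF b])
  also have "\<dots> = z2_sum ?I (?m \<circ> ?\<phi>)"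
    by (rule z2_sum_cong) (use gauss_shuffle_transpose[of _ ps qs] n in auto)
  also have "\<dots> = ?m ` z2_sum ?I ?\<phi>"
  proof (rule z2_sum_comp_inj)
    have "?\<phi> ` ?I \<subseteq> extensional (standard_simplex p)"
      by (auto simp: gauss_shuffle_def gauss_simplex_def)
    then show "inj_on ?m (?\<phi> ` ?I)"
      using inj_simplex_map_uminus inj_on_subset by blast
  qed
  also have "z2_sum ?I ?\<phi> = cell_chain K \<gamma> (\<sigma>,\<tau>)"
    using n by (simp add: cell_chain_def cell_terms_def ps_def qs_def)
  finally show ?thesis .
qed


lemma gauss_chain_map_swap:
  fixes \<gamma> :: "nat \<Rightarrow> 'v set set \<Rightarrow> ((nat \<Rightarrow> real) \<Rightarrow> real^'n) set"
  assumes fsc: "finite_simplicial_complex K" and hae: "hom_almost_embedding K \<gamma>"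
    and A: "A \<subseteq> dcells K p"
  shows "gauss_chain_map K \<gamma> p (dswap A) = santi p (gauss_chain_map K \<gamma> p A)"
proof -
  let ?m = "simplex_map p (uminus :: real^'n \<Rightarrow> real^'n)"
  let ?swap = "\<lambda>(\<sigma>::'v set, \<tau>::'v set). (\<tau>, \<sigma>)"
  let ?C = "cell_chain K \<gamma>"
  have fA: "finite A" using A finite_dcells[OF fsc] by (rule finite_subset)
  have ext_cell: "?C c \<subseteq> extensional (standard_simplex p)" if "c \<in> A" for c
    using A that by (auto intro: cell_chain_extensional[OF fsc])
  then have ext: "snd ` Sigma A ?C \<subseteq> extensional (standard_simplex p)" by fastforce
  have swap: "?C (?swap c) = z2_sum (?C c) ?m" if c: "c \<in> A" for c
  proof -
    obtain \<sigma> \<tau> where c_eq: "c = (\<sigma>,\<tau>)" by (cases c)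
    have "z2_sum (?C c) ?m = ?m ` ?C c"
      by (intro z2_sum_inj inj_on_subset[OF inj_simplex_map_uminus ext_cell[OF c]])
    moreover have "(\<sigma>,\<tau>) \<in> dcells K p" using A c unfolding c_eq by auto
    ultimately show ?thesis unfolding c_eq by (simp add: cell_chain_swap[OF fsc])
  qed
  have "gauss_chain_map K \<gamma> p (dswap A) = z2_sum (Sigma (?swap ` A) ?C) snd"
    by (simp add: gauss_chain_map_def dswap_def)
  also have "\<dots> = z2_sum (Sigma A (\<lambda>c. ?C (?swap c))) snd"
    by (rule z2_sum_Sigma_reindex) (auto simp: inj_on_def)
  also have "Sigma A (\<lambda>c. ?C (?swap c)) = Sigma A (\<lambda>c. z2_sum (?C c) ?m)"
    by (rule Sigma_cong[OF refl swap])
  also have "z2_sum \<dots> snd = z2_sum (Sigma A ?C) (\<lambda>(c,z). ?m z)"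
    by (rule z2_sum_Sigma_inner) (use fA finite_cell_chain[OF fsc hae] in auto)
  also have "\<dots> = z2_sum (Sigma A ?C) (?m \<circ> snd)"
    by (simp add: case_prod_beta' comp_def)
  also have "\<dots> = ?m ` z2_sum (Sigma A ?C) snd"
    by (rule z2_sum_comp_inj) (rule inj_on_subset[OF inj_simplex_map_uminus ext])
  finally show ?thesis by (simp add: santi_def gauss_chain_map_def)
qed

theorem lemma19:
  fixes K :: "'v set set"
    and \<gamma> :: "nat \<Rightarrow> 'v set set \<Rightarrow> ((nat \<Rightarrow> real) \<Rightarrow> real^'n) set"
  assumes fsc: "finite_simplicial_complex K"
    and hae: "hom_almost_embedding K \<gamma>"
  shows "\<exists>g :: nat \<Rightarrow> ('v set \<times> 'v set) set \<Rightarrow> ((nat \<Rightarrow> real) \<Rightarrow> real^'n) set.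
           nontrivial_equivariant_sphere_map K g"
proof
  show "nontrivial_equivariant_sphere_map K (gauss_chain_map K \<gamma>)"
    unfolding nontrivial_equivariant_sphere_map_def zchain_map_def
    by (intro conjI allI impI gauss_chain_map_symd[OF fsc hae] gauss_chain_map_zchain[OF fsc hae]
        sbd_gauss_chain_map[OF fsc hae] gauss_chain_map_swap[OF fsc hae]
        gauss_chain_map_nontrivial[OF fsc hae])
qed

end
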